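(* In the setting of the context, assume $G_{xy}^{[1]}=1$, $G_x^{[1]}\neq1$ and $G_x/G_x^{[1]}\cong A_5$. Then $G_x\cong A_5\times A_4$ and $G_e\cong A_4\wr C_2$.
   Context: $\mathcal{A}=(G_x,G_e,G_{xy})$ is a finite, primitive amalgam of degree $(5,2)$ (no nontrivial subgroup of $G_{xy}$ normal in both $G_x$ and $G_e$; $|G_x:G_{xy}|=5$, $|G_e:G_{xy}|=2$), $G=G_x*_{G_{xy}}G_e$ acts on the coset graph (5-valent tree) $\Gamma$, $x$ is the vertex with stabiliser $G_x$, $y$ the neighbour with $G_e$ the setwise stabiliser of $\{x,y\}$ and $G_x\cap G_y=G_{xy}$. $G_z^{[1]}$ is the pointwise stabiliser of $z$ and its neighbours, $G_{xy}^{[1]}=G_x^{[1]}\cap G_y^{[1]}$. *)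

theory Defs
  imports "HOL-Algebra.Sym_Groups"
begin

text \<open>An amalgam (Gx, Ge, Gxy) is represented by two subgroups Gx, Ge of an ambient
  group G (e.g. the free amalgamated product) with Gxy = Gx \<inter> Ge.\<close>

definition sub_index :: "('a, 'b) monoid_scheme \<Rightarrow> 'a set \<Rightarrow> 'a set \<Rightarrow> nat" where
  "sub_index G A B = card (rcosets\<^bsub>G\<lparr>carrier := A\<rparr>\<^esub> B)"

definition primitive_amalgam :: "('a, 'b) monoid_scheme \<Rightarrow> 'a set \<Rightarrow> 'a set \<Rightarrow> bool" where
  "primitive_amalgam G Gx Ge \<longleftrightarrow>
     (\<forall>N. N \<subseteq> Gx \<inter> Ge \<and> N \<lhd> G\<lparr>carrier := Gx\<rparr> \<and> N \<lhd> G\<lparr>carrier := Ge\<rparr> \<longrightarrow> N = {\<one>\<^bsub>G\<^esub>})"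

text \<open>Kernel of the action of a vertex stabiliser A on the neighbours of the vertex,
  the neighbours being identified with the cosets a B (a \<in> A), B the arc stabiliser:
  the pointwise stabiliser of the vertex and its neighbours.\<close>
definition kernel1 :: "('a, 'b) monoid_scheme \<Rightarrow> 'a set \<Rightarrow> 'a set \<Rightarrow> 'a set" where
  "kernel1 G A B = {g \<in> A. \<forall>h \<in> A. inv\<^bsub>G\<^esub> h \<otimes>\<^bsub>G\<^esub> g \<otimes>\<^bsub>G\<^esub> h \<in> B}"

text \<open>An element of Ge swapping x and y.\<close>
definition flip_elt :: "('a, 'b) monoid_scheme \<Rightarrow> 'a set \<Rightarrow> 'a set \<Rightarrow> 'a" where
  "flip_elt G Gx Ge = (SOME t. t \<in> Ge \<and> t \<notin> Gx)"

text \<open>Stabiliser of the neighbour y = t x of x.\<close>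
definition stab_y :: "('a, 'b) monoid_scheme \<Rightarrow> 'a set \<Rightarrow> 'a set \<Rightarrow> 'a set" where
  "stab_y G Gx Ge = (\<lambda>g. flip_elt G Gx Ge \<otimes>\<^bsub>G\<^esub> g \<otimes>\<^bsub>G\<^esub> inv\<^bsub>G\<^esub> (flip_elt G Gx Ge)) ` Gx"

definition Gx1 :: "('a, 'b) monoid_scheme \<Rightarrow> 'a set \<Rightarrow> 'a set \<Rightarrow> 'a set" where
  "Gx1 G Gx Ge = kernel1 G Gx (Gx \<inter> Ge)"

definition Gy1 :: "('a, 'b) monoid_scheme \<Rightarrow> 'a set \<Rightarrow> 'a set \<Rightarrow> 'a set" where
  "Gy1 G Gx Ge = kernel1 G (stab_y G Gx Ge) (Gx \<inter> Ge)"

definition Gxy1 :: "('a, 'b) monoid_scheme \<Rightarrow> 'a set \<Rightarrow> 'a set \<Rightarrow> 'a set" where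
  "Gxy1 G Gx Ge = Gx1 G Gx Ge \<inter> Gy1 G Gx Ge"

text \<open>Wreath product H wr C2 = (H \<times> H) \<rtimes> C2, C2 = bool under xor, acting by swapping.\<close>
definition wreath_mult :: "('a, 'b) monoid_scheme \<Rightarrow> 'a \<times> 'a \<times> bool \<Rightarrow> 'a \<times> 'a \<times> bool \<Rightarrow> 'a \<times> 'a \<times> bool" where
  "wreath_mult H p q =
     (let (a, b, s) = p; (c, d, u) = q in
      if s then (a \<otimes>\<^bsub>H\<^esub> d, b \<otimes>\<^bsub>H\<^esub> c, s \<noteq> u)
           else (a \<otimes>\<^bsub>H\<^esub> c, b \<otimes>\<^bsub>H\<^esub> d, s \<noteq> u))"

definition wreath_C2 :: "('a, 'b) monoid_scheme \<Rightarrow> ('a \<times> 'a \<times> bool) monoid" where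
  "wreath_C2 H = \<lparr> carrier = carrier H \<times> carrier H \<times> (UNIV :: bool set),
     mult = wreath_mult H, one = (\<one>\<^bsub>H\<^esub>, \<one>\<^bsub>H\<^esub>, False) \<rparr>"

end

theory Submission
  imports Defs "HOL-Algebra.Group_Action"
begin

text \<open>Let \<open>t \<in> Ge - Gx\<close>, \<open>Kx = G\<^sub>x\<^sup>[\<^sup>1\<^sup>]\<close> and \<open>Ky = G\<^sub>y\<^sup>[\<^sup>1\<^sup>] = t Kx t\<^sup>-\<^sup>1\<close>.
  Both are normal in \<open>Gxy\<close>, which has index 2 in \<open>Ge\<close>, and they meet trivially, so they
  commute. The action \<open>\<psi> : Gx \<rightarrow> Gx/Kx \<cong> A\<^sub>5\<close> on the neighbours of \<open>x\<close> maps \<open>Gxy\<close>,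
  a subgroup of order 12, onto a point stabiliser, which we may take to be \<open>A\<^sub>4\<close>. Since \<open>\<psi>\<close>
  is injective on \<open>Ky\<close>, \<open>\<psi>(Ky)\<close> is a nontrivial normal subgroup of \<open>A\<^sub>4\<close>, so
  \<open>|Kx| = |Ky| \<in> {4, 12}\<close>; order 4 is impossible because \<open>A\<^sub>4\<close> does not centralise
  \<open>V\<^sub>4\<close>. Hence \<open>\<psi>(Ky) = A\<^sub>4\<close>. The centraliser \<open>Cx\<close> of \<open>Kx\<close> in \<open>Gx\<close> is normal
  and contains \<open>Ky\<close>, so \<open>\<psi>(Cx) = A\<^sub>5\<close>, and \<open>Cx \<inter> Kx = 1\<close> as \<open>A\<^sub>4\<close> has trivial
  centre; thus \<open>Gx = Cx \<times> Kx \<cong> A\<^sub>5 \<times> A\<^sub>4\<close>. Finally \<open>Gxy = Kx \<times> Ky\<close>, and an involution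
  in \<open>Ge - Gx\<close> interchanging \<open>Kx\<close> and \<open>Ky\<close> exhibits \<open>Ge\<close> as \<open>A\<^sub>4 wr C\<^sub>2\<close>.\<close>

section \<open>Computing in the alternating groups of degree 4 and 5\<close>

text \<open>A permutation of \<open>{1..n}\<close> is represented by the list of its values at \<open>1, \<dots>, n\<close>.\<close>

definition perm_of_list :: "nat list \<Rightarrow> nat \<Rightarrow> nat" where
  "perm_of_list xs i = (if 1 \<le> i \<and> i \<le> length xs then xs ! (i - 1) else i)"

definition list5 :: "nat list \<Rightarrow> bool" where
  "list5 xs \<longleftrightarrow> length xs = 5 \<and> set xs \<subseteq> {1..5}"

definition list_comp :: "nat list \<Rightarrow> nat list \<Rightarrow> nat list" where
  "list_comp xs ys = map (\<lambda>y. xs ! (y - 1)) ys"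

lemma list5_nth_mem: "list5 xs \<Longrightarrow> i \<in> {1..5} \<Longrightarrow> xs ! (i - 1) \<in> {1..5}"
  unfolding list5_def by (metis atLeastAtMost_iff diff_less less_le_trans nth_mem subsetD zero_less_one)

lemma list5_list_comp: "list5 xs \<Longrightarrow> list5 ys \<Longrightarrow> list5 (list_comp xs ys)"
  using list5_nth_mem[of xs] by (auto simp: list5_def list_comp_def)

lemma perm_of_list_comp:
  assumes "list5 xs" "list5 ys"
  shows "perm_of_list xs \<circ> perm_of_list ys = perm_of_list (list_comp xs ys)"
proof
  fix i
  show "(perm_of_list xs \<circ> perm_of_list ys) i = perm_of_list (list_comp xs ys) i"
  proof (cases "i \<in> {1..5}")
    case True
    have "ys ! (i - 1) \<in> {1..5}" by (rule list5_nth_mem[OF assms(2) True])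
    then show ?thesis using True assms by (auto simp: perm_of_list_def list_comp_def list5_def)
  qed (use assms in \<open>auto simp: perm_of_list_def list_comp_def list5_def\<close>)
qed

lemma perm_of_list_inj:
  assumes "length xs = length ys" "perm_of_list xs = perm_of_list ys"
  shows "xs = ys"
proof (rule nth_equalityI)
  fix i assume "i < length xs"
  then show "xs ! i = ys ! i"
    using fun_cong[OF assms(2), of "Suc i"] assms(1) by (simp add: perm_of_list_def)
qed (fact assms(1))

lemma perm_of_list_eqI:
  assumes "length xs = 5" "\<And>i. i \<in> {1,2,3,4,5} \<Longrightarrow> p i = xs ! (i - 1)"
    and "\<And>i. i \<notin> {1..5} \<Longrightarrow> p i = i"
  shows "perm_of_list xs = p"
proof
  fix i
  show "perm_of_list xs i = p i"
  proof (cases "i \<in> {1..5}")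
    case True
    then have "i \<in> {1,2,3,4,5}" by auto
    with True assms(1,2) show ?thesis by (simp add: perm_of_list_def)
  qed (use assms in \<open>auto simp: perm_of_list_def\<close>)
qed

lemma perm_of_list_id: "perm_of_list [1,2,3,4,5] = id"
  by (rule perm_of_list_eqI) auto

lemma transpose_comp_transpose_in_alt_group:
  assumes "a \<in> {1..n}" "b \<in> {1..n}" "c \<in> {1..n}" "d \<in> {1..n}" "a \<noteq> b" "c \<noteq> d"
  shows "transpose a b \<circ> transpose c d \<in> carrier (alt_group n)"
  using assms
  by (auto simp: alt_group_carrier evenperm_comp evenperm_swap permutation_swap_id
      intro!: permutes_compose permutes_swap_id)

definition closure_step :: "('a \<Rightarrow> 'a) list \<Rightarrow> 'a list \<Rightarrow> 'a list" where
  "closure_step fs xs = remdups (xs @ concat (map (\<lambda>f. map f xs) fs))"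

lemma closure_step_invariant:
  assumes "\<And>f x. f \<in> set fs \<Longrightarrow> P x \<Longrightarrow> P (f x)" "\<forall>x\<in>set xs. P x"
  shows "\<forall>x\<in>set ((closure_step fs ^^ n) xs). P x"
  by (induction n) (auto simp: closure_step_def assms)

text \<open>The pairs \<open>(c, c')\<close> in \<open>cs\<close> are meant to satisfy \<open>c' = c\<^sup>-\<^sup>1\<close>; the result is part of
  the normal closure of \<open>x\<close>.\<close>

definition normal_closure :: "(nat list \<times> nat list) list \<Rightarrow> nat \<Rightarrow> nat \<Rightarrow> nat list \<Rightarrow> nat list list" where
  "normal_closure cs k m x =
     (let C = (closure_step (map (\<lambda>(c, c') a. list_comp (list_comp c a) c') cs) ^^ k) [x]
      in (closure_step (map (\<lambda>c a. list_comp a c) C) ^^ m) C)"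

lemma perm_of_list_normal_closure:
  assumes mult: "\<And>p q. p \<in> N \<Longrightarrow> q \<in> N \<Longrightarrow> p \<circ> q \<in> N"
    and conj: "\<And>c c' p. (c, c') \<in> set cs \<Longrightarrow> p \<in> N \<Longrightarrow> perm_of_list c \<circ> p \<circ> perm_of_list c' \<in> N"
    and cs: "\<And>c c'. (c, c') \<in> set cs \<Longrightarrow> list5 c \<and> list5 c'"
    and x: "list5 x" "perm_of_list x \<in> N"
  shows "perm_of_list ` set (normal_closure cs k m x) \<subseteq> N"
proof -
  let ?P = "\<lambda>a. list5 a \<and> perm_of_list a \<in> N"
  define C where "C = (closure_step (map (\<lambda>(c, c') a. list_comp (list_comp c a) c') cs) ^^ k) [x]"
  have "\<forall>a\<in>set C. ?P a"
    unfolding C_def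
  proof (rule closure_step_invariant)
    fix f a assume "f \<in> set (map (\<lambda>(c, c') a. list_comp (list_comp c a) c') cs)" "?P a"
    then obtain c c' where "(c, c') \<in> set cs" "f = (\<lambda>a. list_comp (list_comp c a) c')" by auto
    with \<open>?P a\<close> show "?P (f a)"
      using conj cs by (auto simp: perm_of_list_comp[symmetric] list5_list_comp)
  qed (use x in simp)
  then have "\<forall>a\<in>set ((closure_step (map (\<lambda>c a. list_comp a c) C) ^^ m) C). ?P a"
    by (intro closure_step_invariant) (auto simp: mult perm_of_list_comp[symmetric] list5_list_comp)
  then show ?thesis by (auto simp: normal_closure_def C_def[symmetric] Let_def)
qed

definition A5_list :: "nat list list" where
  "A5_list = [[1,2,3,4,5], [2,3,1,4,5], [2,3,4,5,1], [3,1,2,4,5], [3,1,4,5,2], [3,4,2,5,1], [3,4,5,1,2], [1,2,4,5,3], [1,4,3,5,2], [1,4,5,2,3], [4,2,3,5,1], [4,2,5,1,3], [4,5,3,1,2], [4,5,1,2,3], [2,4,1,5,3], [2,4,5,3,1], [4,3,1,5,2], [4,3,5,2,1], [4,5,2,3,1], [2,3,5,1,4], [2,5,4,1,3], [2,5,1,3,4], [5,3,4,1,2], [5,3,1,2,4], [5,1,4,2,3], [5,1,2,3,4], [4,1,2,5,3], [4,1,5,3,2], [3,1,5,2,4], [3,5,4,2,1], [3,5,2,1,4], [5,2,4,3,1], [5,2,3,1,4], [3,5,1,4,2], [5,4,2,1,3], [5,4,1,3,2], [5,1,3,4,2], [3,4,1,2,5], [1,4,2,3,5], [1,2,5,3,4],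 [1,5,4,3,2], [1,5,3,2,4], [1,5,2,4,3], [5,4,3,2,1], [5,2,1,4,3], [2,4,3,1,5], [4,2,1,3,5], [4,1,3,2,5], [1,3,5,4,2], [1,3,4,2,5], [2,5,3,4,1], [5,3,2,4,1], [4,3,2,1,5], [2,1,5,4,3], [2,1,4,3,5], [2,1,3,5,4], [1,3,2,5,4], [3,2,5,4,1], [3,2,4,1,5], [3,2,1,5,4]]"

text \<open>Entry \<open>xs ! 4\<close> is the image of \<open>5\<close>.\<close>

definition A4_list :: "nat list list" where
  "A4_list = filter (\<lambda>xs. xs ! 4 = 5) A5_list"

definition V4_list :: "nat list list" where
  "V4_list = [[1,2,3,4,5], [2,1,4,3,5], [3,4,1,2,5], [4,3,2,1,5]]"

definition klein4 :: "(nat \<Rightarrow> nat) set" where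
  "klein4 = perm_of_list ` set V4_list"

interpretation alt5: group "alt_group 5"
  by (rule alt_group_is_group)

lemma list5_A5_list: "\<forall>xs\<in>set A5_list. list5 xs"
  by (simp add: A5_list_def list5_def)

lemma perm_of_list_comm_iff:
  assumes "list5 xs" "list5 ys"
  shows "perm_of_list xs \<circ> perm_of_list ys = perm_of_list ys \<circ> perm_of_list xs \<longleftrightarrow>
    list_comp xs ys = list_comp ys xs"
  using assms perm_of_list_inj[of "list_comp xs ys" "list_comp ys xs"]
  by (auto simp: perm_of_list_comp list5_def list_comp_def)

lemma perm_of_list_inv:
  assumes "list5 xs" "list5 ys" "list_comp xs ys = [1,2,3,4,5]" "list_comp ys xs = [1,2,3,4,5]"
  shows "inv' (perm_of_list xs) = perm_of_list ys"
  using assms perm_of_list_comp[of xs ys] perm_of_list_comp[of ys xs]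
  by (metis inv_unique_comp perm_of_list_id)

lemma generators_in_alt_group5:
  "perm_of_list [2,3,1,4,5] \<in> carrier (alt_group 5)"
  "perm_of_list [2,3,4,5,1] \<in> carrier (alt_group 5)"
  "perm_of_list [2,1,4,3,5] \<in> carrier (alt_group 5)"
proof -
  have t: "transpose 1 2 \<circ> transpose 2 3 \<in> carrier (alt_group 5)"
    "transpose 3 4 \<circ> transpose 4 5 \<in> carrier (alt_group 5)"
    "transpose 1 2 \<circ> transpose 3 4 \<in> carrier (alt_group 5)"
    by (auto intro: transpose_comp_transpose_in_alt_group)
  have "perm_of_list [2,3,1,4,5] = transpose 1 2 \<circ> transpose 2 3"
    "perm_of_list [2,3,4,5,1] = (transpose 1 2 \<circ> transpose 2 3) \<circ> (transpose 3 4 \<circ> transpose 4 5)"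
    "perm_of_list [2,1,4,3,5] = transpose 1 2 \<circ> transpose 3 4"
    by (auto intro!: perm_of_list_eqI simp: transpose_def)
  with t alt5.m_closed[OF t(1,2)] show "perm_of_list [2,3,1,4,5] \<in> carrier (alt_group 5)"
    "perm_of_list [2,3,4,5,1] \<in> carrier (alt_group 5)"
    "perm_of_list [2,1,4,3,5] \<in> carrier (alt_group 5)"
    by (simp_all add: alt_group_mult)
qed

lemma alt_group_comp_closed:
  "p \<in> carrier (alt_group n) \<Longrightarrow> q \<in> carrier (alt_group n) \<Longrightarrow> p \<circ> q \<in> carrier (alt_group n)"
  using monoid.m_closed[OF group.is_monoid[OF alt_group_is_group]] by (fastforce simp: alt_group_mult)

lemma alt_group5_conj_closed:
  "g \<in> carrier (alt_group 5) \<Longrightarrow> p \<in> carrier (alt_group 5) \<Longrightarrow> g \<circ> p \<circ> inv' g \<in> carrier (alt_group 5)"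
  using alt5.m_closed alt_group_inv_closed by (simp add: alt_group_mult)

text \<open>The conjugates of \<open>(1 2)(3 4)\<close> under \<open>(1 2 3)\<close> and \<open>(1 2 3 4 5)\<close>, together with their
  pairwise products, are already all 60 even permutations.\<close>

lemma alt_group5_normal_closure:
  assumes mult: "\<And>p q. p \<in> N \<Longrightarrow> q \<in> N \<Longrightarrow> p \<circ> q \<in> N"
    and conj: "\<And>g p. g \<in> carrier (alt_group 5) \<Longrightarrow> p \<in> N \<Longrightarrow> g \<circ> p \<circ> inv' g \<in> N"
    and d: "perm_of_list [2,1,4,3,5] \<in> N"
  shows "perm_of_list ` set A5_list \<subseteq> N"
proof -
  let ?cs = "[([2,3,1,4,5], [3,1,2,4,5]), ([2,3,4,5,1], [5,1,2,3,4])]"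
  have inv: "inv' (perm_of_list [2,3,1,4,5]) = perm_of_list [3,1,2,4,5]"
    "inv' (perm_of_list [2,3,4,5,1]) = perm_of_list [5,1,2,3,4]"
    by (auto intro!: perm_of_list_inv simp: list5_def list_comp_def)
  have "set A5_list \<subseteq> set (normal_closure ?cs 4 1 [2,1,4,3,5])"
    by (simp add: A5_list_def normal_closure_def closure_step_def list_comp_def numeral_eq_Suc)
  moreover have "perm_of_list ` set (normal_closure ?cs 4 1 [2,1,4,3,5]) \<subseteq> N"
  proof (rule perm_of_list_normal_closure[OF mult _ _ _ d])
    show "perm_of_list c \<circ> p \<circ> perm_of_list c' \<in> N" if "(c, c') \<in> set ?cs" "p \<in> N" for c c' p
      using that conj[OF generators_in_alt_group5(1)] conj[OF generators_in_alt_group5(2)] inv by auto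
  qed (auto simp: list5_def)
  ultimately show ?thesis by blast
qed

lemma finite_carrier_alt_group: "finite (carrier (alt_group n))"
  by (rule finite_subset[OF _ finite_permutations[of "{1..n}"]]) (auto simp: alt_group_carrier)

lemma card_alt_group5: "card (carrier (alt_group 5)) = 60"
  using alt_group_card_carrier[of 5] by (simp add: fact_numeral)

lemma carrier_alt_group5: "carrier (alt_group 5) = perm_of_list ` set A5_list"
proof -
  have sub: "perm_of_list ` set A5_list \<subseteq> carrier (alt_group 5)"
    using generators_in_alt_group5(3) alt_group5_conj_closed alt5.m_closed
    by (intro alt_group5_normal_closure) (auto simp: alt_group_mult)
  have "inj_on perm_of_list (set A5_list)"
    using list5_A5_list by (auto intro!: inj_onI perm_of_list_inj simp: list5_def)
  moreover have "distinct A5_list" "length A5_list = 60"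
    by (simp_all add: A5_list_def)
  ultimately have "card (perm_of_list ` set A5_list) = 60"
    by (simp add: card_image distinct_card)
  with sub card_alt_group5 show ?thesis
    by (metis card_subset_eq card.infinite zero_neq_numeral)
qed

lemma alt_group5_normal_subgroup_eq:
  assumes "N \<lhd> alt_group 5" "perm_of_list [2,1,4,3,5] \<in> N"
  shows "N = carrier (alt_group 5)"
proof -
  have "perm_of_list ` set A5_list \<subseteq> N"
  proof (rule alt_group5_normal_closure)
    show "p \<circ> q \<in> N" if "p \<in> N" "q \<in> N" for p q
      using subgroup.m_closed[OF normal_imp_subgroup[OF assms(1)] that] by (simp add: alt_group_mult)
    show "g \<circ> p \<circ> inv' g \<in> N" if "g \<in> carrier (alt_group 5)" "p \<in> N" for g p
      using normal.inv_op_closed2[OF assms(1) that] that(1)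
      by (simp add: alt_group_mult alt_group_inv_equality)
  qed (fact assms(2))
  then show ?thesis
    using subgroup.subset[OF normal_imp_subgroup[OF assms(1)]] carrier_alt_group5 by blast
qed

lemma carrier_alt_group_stabiliser:
  "carrier (alt_group n) = {p \<in> carrier (alt_group (Suc n)). p (Suc n) = Suc n}"
proof safe
  fix p assume "p \<in> carrier (alt_group n)"
  then have p: "p permutes {1..n}" "evenperm p" by (auto simp: alt_group_carrier)
  then show "p \<in> carrier (alt_group (Suc n))"
    by (auto simp: alt_group_carrier intro: permutes_subset)
  show "p (Suc n) = Suc n" using permutes_not_in[OF p(1)] by simp
next
  fix p assume p: "p \<in> carrier (alt_group (Suc n))" "p (Suc n) = Suc n"
  then have "p permutes {1..Suc n}" "evenperm p" by (auto simp: alt_group_carrier)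
  moreover have "p permutes {1..n}"
    by (rule permutes_superset[OF \<open>p permutes {1..Suc n}\<close>]) (use p(2) le_Suc_eq in auto)
  ultimately show "p \<in> carrier (alt_group n)" by (simp add: alt_group_carrier)
qed

lemma carrier_alt_group4: "carrier (alt_group 4) = perm_of_list ` set A4_list"
proof -
  have "perm_of_list xs 5 = xs ! 4" if "xs \<in> set A5_list" for xs
    using list5_A5_list that by (auto simp: perm_of_list_def list5_def)
  then show ?thesis
    using carrier_alt_group_stabiliser[of 4] by (auto simp: carrier_alt_group5 A4_list_def)
qed

lemma card_alt_group4: "card (carrier (alt_group 4)) = 12"
  using alt_group_card_carrier[of 4] by (simp add: fact_numeral)

lemma A4_list_eq: "A4_list = [[1,2,3,4,5], [2,3,1,4,5], [3,1,2,4,5], [3,4,1,2,5], [1,4,2,3,5], [2,4,3,1,5], [4,2,1,3,5], [4,1,3,2,5], [1,3,4,2,5], [4,3,2,1,5], [2,1,4,3,5], [3,2,4,1,5]]"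
  by (simp add: A4_list_def A5_list_def)

lemma list5_A4_list: "\<forall>xs\<in>set A4_list. list5 xs"
  by (simp add: A4_list_eq list5_def)

lemma generators_in_alt_group4:
  "perm_of_list [2,3,1,4,5] \<in> carrier (alt_group 4)"
  "perm_of_list [2,1,4,3,5] \<in> carrier (alt_group 4)"
  unfolding carrier_alt_group4 by (simp_all add: A4_list_eq)

lemma klein4_subset_normal:
  assumes N: "N \<subseteq> carrier (alt_group 4)"
    and mult: "\<And>p q. p \<in> N \<Longrightarrow> q \<in> N \<Longrightarrow> p \<circ> q \<in> N"
    and conj: "\<And>g p. g \<in> carrier (alt_group 4) \<Longrightarrow> p \<in> N \<Longrightarrow> g \<circ> p \<circ> inv' g \<in> N"
    and n: "n \<in> N" "n \<noteq> id"
  shows "klein4 \<subseteq> N"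
proof -
  let ?cs = "[([2,3,1,4,5], [3,1,2,4,5]), ([2,1,4,3,5], [2,1,4,3,5])]"
  obtain x where x: "x \<in> set A4_list" "n = perm_of_list x"
    using n N carrier_alt_group4 by auto
  have "x \<noteq> [1,2,3,4,5]" using n(2) x(2) perm_of_list_id by auto
  moreover have "\<forall>x\<in>set A4_list. x \<noteq> [1,2,3,4,5] \<longrightarrow> set V4_list \<subseteq> set (normal_closure ?cs 1 2 x)"
    by (simp add: A4_list_eq V4_list_def normal_closure_def closure_step_def
        list_comp_def numeral_eq_Suc)
  ultimately have "klein4 \<subseteq> perm_of_list ` set (normal_closure ?cs 1 2 x)"
    using x(1) unfolding klein4_def by blast
  also have "\<dots> \<subseteq> N"
  proof (rule perm_of_list_normal_closure[OF mult])
    have "inv' (perm_of_list [2,3,1,4,5]) = perm_of_list [3,1,2,4,5]"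
      "inv' (perm_of_list [2,1,4,3,5]) = perm_of_list [2,1,4,3,5]"
      by (auto intro!: perm_of_list_inv simp: list5_def list_comp_def)
    then show "perm_of_list c \<circ> p \<circ> perm_of_list c' \<in> N" if "(c, c') \<in> set ?cs" "p \<in> N" for c c' p
      using that conj[OF generators_in_alt_group4(1)] conj[OF generators_in_alt_group4(2)] by auto
    show "list5 x" "perm_of_list x \<in> N" using x n list5_A4_list by auto
  qed (auto simp: list5_def)
  finally show ?thesis .
qed

lemma list5_V4_list: "\<forall>xs\<in>set V4_list. list5 xs"
  by (simp add: V4_list_def list5_def)

lemma klein4_mult_closed: "p \<in> klein4 \<Longrightarrow> q \<in> klein4 \<Longrightarrow> p \<circ> q \<in> klein4"
proof -
  have "\<forall>xs\<in>set V4_list. \<forall>ys\<in>set V4_list. list_comp xs ys \<in> set V4_list"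
    by (simp add: V4_list_def list_comp_def)
  then show "p \<in> klein4 \<Longrightarrow> q \<in> klein4 \<Longrightarrow> p \<circ> q \<in> klein4"
    using list5_V4_list by (auto simp: klein4_def perm_of_list_comp)
qed

lemma klein4_comm: "p \<in> klein4 \<Longrightarrow> q \<in> klein4 \<Longrightarrow> p \<circ> q = q \<circ> p"
proof -
  have "\<forall>xs\<in>set V4_list. \<forall>ys\<in>set V4_list. list_comp xs ys = list_comp ys xs"
    by (simp add: V4_list_def list_comp_def)
  then show "p \<in> klein4 \<Longrightarrow> q \<in> klein4 \<Longrightarrow> p \<circ> q = q \<circ> p"
    using list5_V4_list by (auto simp: klein4_def perm_of_list_comm_iff)
qed

lemma klein4_subset_alt_group4: "klein4 \<subseteq> carrier (alt_group 4)"
  unfolding klein4_def carrier_alt_group4 by (intro image_mono) (simp add: V4_list_def A4_list_eq)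

lemma klein4_subgroup: "subgroup klein4 (alt_group 5)"
proof (rule alt5.subgroupI)
  show "klein4 \<subseteq> carrier (alt_group 5)"
    using klein4_subset_alt_group4 carrier_alt_group_stabiliser[of 4] by auto
  then show "inv\<^bsub>alt_group 5\<^esub> p \<in> klein4" if p: "p \<in> klein4" for p
  proof -
    obtain xs where xs: "xs \<in> set V4_list" "p = perm_of_list xs"
      using p by (auto simp: klein4_def)
    have "p \<circ> p = perm_of_list (list_comp xs xs)"
      using xs list5_V4_list by (simp add: perm_of_list_comp)
    moreover have "list_comp xs xs = [1,2,3,4,5]"
      using xs(1) by (auto simp: V4_list_def list_comp_def)
    ultimately have "p \<circ> p = id" by (simp only: perm_of_list_id)
    then have "inv' p = p" by (intro inv_unique_comp)
    with p \<open>klein4 \<subseteq> carrier (alt_group 5)\<close> show ?thesis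
      by (simp add: alt_group_inv_equality subset_iff)
  qed
  show "klein4 \<noteq> {}" by (simp add: klein4_def V4_list_def)
  show "p \<otimes>\<^bsub>alt_group 5\<^esub> q \<in> klein4" if "p \<in> klein4" "q \<in> klein4" for p q
    using that klein4_mult_closed by (simp add: alt_group_mult)
qed

lemma card_klein4: "card klein4 = 4"
proof -
  have "inj_on perm_of_list (set V4_list)"
    using list5_V4_list by (auto intro!: inj_onI perm_of_list_inj simp: list5_def)
  then show ?thesis by (simp add: klein4_def card_image) (simp add: V4_list_def)
qed

lemma klein4_double_transposition: "perm_of_list [2,1,4,3,5] \<in> klein4"
  by (simp add: klein4_def V4_list_def)

lemma klein4_not_central:
  "perm_of_list [2,3,1,4,5] \<circ> perm_of_list [2,1,4,3,5] \<noteq> perm_of_list [2,1,4,3,5] \<circ> perm_of_list [2,3,1,4,5]"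
  by (subst perm_of_list_comm_iff) (simp_all add: list5_def list_comp_def)

lemma alt_group4_centre_trivial:
  assumes "z \<in> carrier (alt_group 4)" "\<And>g. g \<in> carrier (alt_group 4) \<Longrightarrow> z \<circ> g = g \<circ> z"
  shows "z = id"
proof -
  obtain xs where xs: "xs \<in> set A4_list" "z = perm_of_list xs"
    using assms(1) carrier_alt_group4 by auto
  have "list5 xs" using xs(1) list5_A4_list by blast
  then have "list_comp xs [2,3,1,4,5] = list_comp [2,3,1,4,5] xs"
    "list_comp xs [2,1,4,3,5] = list_comp [2,1,4,3,5] xs"
    using xs(2) assms(2)[OF generators_in_alt_group4(1)] assms(2)[OF generators_in_alt_group4(2)]
    by (simp_all add: perm_of_list_comm_iff list5_def)
  moreover have "\<forall>xs\<in>set A4_list. list_comp xs [2,3,1,4,5] = list_comp [2,3,1,4,5] xs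
      \<longrightarrow> list_comp xs [2,1,4,3,5] = list_comp [2,1,4,3,5] xs \<longrightarrow> xs = [1,2,3,4,5]"
    by (simp add: A4_list_eq list_comp_def)
  ultimately have "xs = [1,2,3,4,5]" using xs(1) by blast
  then show ?thesis using xs(2) perm_of_list_id by simp
qed

lemma alt_group_apply_in: "p \<in> carrier (alt_group n) \<Longrightarrow> i \<in> {1..n} \<Longrightarrow> p i \<in> {1..n}"
  unfolding alt_group_carrier by (meson permutes_in_image)

lemma alt_group_orbit_card_dvd:
  assumes H: "subgroup H (alt_group n)" and i: "i \<in> {1..n}"
  shows "card ((\<lambda>p. p i) ` H) dvd card H"
proof -
  define H' where "H' = (alt_group n)\<lparr>carrier := H\<rparr>"
  define \<phi> where "\<phi> = (\<lambda>p::nat \<Rightarrow> nat. restrict p {1..n})"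
  have perm: "p permutes {1..n}" if "p \<in> H" for p
    using subgroup.subset[OF H] that by (auto simp: alt_group_carrier)
  have restrict_bij: "\<phi> p \<in> Bij {1..n}" if "p \<in> H" for p
    using permutes_imp_bij[OF perm[OF that]]
    by (auto simp: Bij_def \<phi>_def intro: bij_betw_cong[THEN iffD1, rotated])
  have "\<phi> \<in> hom H' (BijGroup {1..n})"
  proof (rule homI)
    show "\<phi> p \<in> carrier (BijGroup {1..n})" if "p \<in> carrier H'" for p
      using restrict_bij that by (simp add: BijGroup_def H'_def)
    show "\<phi> (p \<otimes>\<^bsub>H'\<^esub> q) = \<phi> p \<otimes>\<^bsub>BijGroup {1..n}\<^esub> \<phi> q" if "p \<in> carrier H'" "q \<in> carrier H'" for p q
      using that restrict_bij permutes_in_image[OF perm[of q]]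
      by (auto simp: H'_def alt_group_mult BijGroup_def compose_def \<phi>_def)
  qed
  then have "group_action H' {1..n} \<phi>"
    using subgroup.subgroup_is_group[OF H alt_group_is_group] group_BijGroup
    by (simp add: group_action_def group_hom_def group_hom_axioms_def H'_def)
  moreover have "orbit H' \<phi> i = (\<lambda>p. p i) ` H"
    using i by (auto simp: orbit_def H'_def \<phi>_def)
  ultimately have "card ((\<lambda>p. p i) ` H) * card (stabilizer H' \<phi> i) = card H"
    using group_action.orbit_stabilizer_theorem[of H' "{1..n}" \<phi> i] i by (simp add: order_def H'_def)
  then show ?thesis by (metis dvd_triv_left)
qed

lemma subgroup_alt_group_orbit_stable:
  assumes H: "subgroup H (alt_group n)" and p: "p \<in> H"
  shows "p y \<in> (\<lambda>q. q i) ` H \<longleftrightarrow> y \<in> (\<lambda>q. q i) ` H"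
proof
  assume "y \<in> (\<lambda>q. q i) ` H"
  then obtain q where q: "q \<in> H" "y = q i" by auto
  have "p \<circ> q \<in> H" using subgroup.m_closed[OF H p q(1)] by (simp add: alt_group_mult)
  then show "p y \<in> (\<lambda>q. q i) ` H" using q(2) by (auto intro: image_eqI[where x = "p \<circ> q"])
next
  assume "p y \<in> (\<lambda>q. q i) ` H"
  then obtain q where q: "q \<in> H" "p y = q i" by auto
  have "p permutes {1..n}" using subgroup.subset[OF H] p by (auto simp: alt_group_carrier)
  then have "y = (inv' p \<circ> q) i" using q(2) by (metis comp_apply permutes_inverses(2))
  moreover have "inv' p \<in> H"
    using subgroup.m_inv_closed[OF H p] subgroup.subset[OF H] p by (auto simp: alt_group_inv_equality)
  then have "inv' p \<circ> q \<in> H" using subgroup.m_closed[OF H _ q(1)] by (simp add: alt_group_mult)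
  ultimately show "y \<in> (\<lambda>q. q i) ` H" by blast
qed

lemma card_alt_group5_pair_stabiliser:
  assumes "u \<in> {1..5}" "v \<in> {1..5}" "u \<noteq> v"
  shows "card {p \<in> carrier (alt_group 5). p u \<in> {u, v} \<and> p v \<in> {u, v}} \<le> 6"
proof -
  let ?f = "filter (\<lambda>xs. xs ! (u - 1) \<in> {u, v} \<and> xs ! (v - 1) \<in> {u, v}) A5_list"
  have "list_all (\<lambda>u. list_all (\<lambda>v. u = v \<or>
      length (filter (\<lambda>xs. xs ! (u - 1) \<in> {u, v} \<and> xs ! (v - 1) \<in> {u, v}) A5_list) \<le> 6)
      [1,2,3,4,5]) [1,2,3,4,5]"
    by (simp add: A5_list_def)
  moreover have "u \<in> set [1,2,3,4,5]" "v \<in> set [1,2,3,4,5]" using assms(1,2) by auto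
  ultimately have "length ?f \<le> 6" using assms(3) by (simp only: list_all_iff) blast
  moreover have "{p \<in> carrier (alt_group 5). p u \<in> {u, v} \<and> p v \<in> {u, v}} \<subseteq> perm_of_list ` set ?f"
  proof
    fix p assume p: "p \<in> {p \<in> carrier (alt_group 5). p u \<in> {u, v} \<and> p v \<in> {u, v}}"
    then obtain xs where xs: "xs \<in> set A5_list" "p = perm_of_list xs" by (auto simp: carrier_alt_group5)
    then have "p u = xs ! (u - 1)" "p v = xs ! (v - 1)"
      using assms(1,2) list5_A5_list by (auto simp: perm_of_list_def list5_def)
    with p xs show "p \<in> perm_of_list ` set ?f" by auto
  qed
  then have "card {p \<in> carrier (alt_group 5). p u \<in> {u, v} \<and> p v \<in> {u, v}} \<le> length ?f"
    by (meson List.finite_set card_image_le card_length card_mono finite_imageI le_trans)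
  ultimately show ?thesis by simp
qed

lemma alt_group5_transitive: "i \<in> {1..5} \<Longrightarrow> \<exists>p\<in>carrier (alt_group 5). p i = 5"
proof -
  assume i: "i \<in> {1..5}"
  have "list_all (\<lambda>i. list_ex (\<lambda>xs. xs ! (i - 1) = 5) A5_list) [1,2,3,4,5]"
    by (simp add: A5_list_def)
  moreover have "i \<in> set [1,2,3,4,5]" using i by auto
  ultimately obtain xs where "xs \<in> set A5_list" "xs ! (i - 1) = 5"
    by (simp only: list_all_iff list_ex_iff) blast
  with i list5_A5_list show ?thesis
    by (auto simp: carrier_alt_group5 perm_of_list_def list5_def)
qed

lemma alt_group5_order12_no_stable_pair:
  assumes H: "subgroup H (alt_group 5)" and card_H: "card H = 12"
    and S: "S \<subseteq> {1..5}" "card S = 2"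
  shows "\<exists>p\<in>H. \<exists>y\<in>S. p y \<notin> S"
proof (rule ccontr)
  assume "\<not> ?thesis"
  moreover obtain u v where uv: "S = {u, v}" "u \<noteq> v" using S(2) card_2_iff by metis
  ultimately have "H \<subseteq> {p \<in> carrier (alt_group 5). p u \<in> {u, v} \<and> p v \<in> {u, v}}"
    using subgroup.subset[OF H] by auto
  then have "card H \<le> card {p \<in> carrier (alt_group 5). p u \<in> {u, v} \<and> p v \<in> {u, v}}"
    using finite_carrier_alt_group by (intro card_mono) auto
  also have "\<dots> \<le> 6" using card_alt_group5_pair_stabiliser uv S(1) by auto
  finally show False using card_H by simp
qed

text \<open>The orbits of \<open>H\<close> have sizes dividing 12 and summing to 5; an orbit of size 2 or 3 would
  make \<open>H\<close> stabilise a pair of points, which only 6 even permutations do.\<close>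

lemma alt_group5_order12_subgroup_fixpoint:
  assumes H: "subgroup H (alt_group 5)" and card_H: "card H = 12"
  shows "\<exists>i\<in>{1..5}. \<forall>p\<in>H. p i = i"
proof -
  define Orb where "Orb = (\<lambda>p. p 1) ` H"
  have HA: "H \<subseteq> carrier (alt_group 5)" using subgroup.subset[OF H] .
  have no_pair: False if "S \<subseteq> {1..5}" "card S = 2" "\<forall>p\<in>H. \<forall>y\<in>S. p y \<in> S" for S
    using alt_group5_order12_no_stable_pair[OF H card_H that(1,2)] that(3) by blast
  have stable: "p y \<in> Orb \<longleftrightarrow> y \<in> Orb" if "p \<in> H" for p y
    unfolding Orb_def using subgroup_alt_group_orbit_stable[OF H that] .
  have apply_in: "p y \<in> {1..5}" if "p \<in> H" "y \<in> {1..5}" for p y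
    using alt_group_apply_in[of p 5 y] HA that by blast
  have Orb_sub: "Orb \<subseteq> {1..5}" unfolding Orb_def using apply_in by auto
  then have fin: "finite Orb" using finite_subset by blast
  have "1 \<in> Orb"
    unfolding Orb_def using subgroup.one_closed[OF H] by (auto simp: alt_group_one intro!: image_eqI[where x = id])
  have "card Orb dvd 12" using alt_group_orbit_card_dvd[OF H, of 1] card_H by (simp add: Orb_def)
  then have "card Orb \<noteq> 5" by auto
  moreover have "card Orb \<noteq> 0" using \<open>1 \<in> Orb\<close> fin by auto
  moreover have "card Orb \<le> 5" using card_mono[OF _ Orb_sub] by simp
  ultimately have "card Orb \<in> {1, 2, 3, 4}" by auto
  moreover have card_compl: "card ({1..5} - Orb) = 5 - card Orb"
    using Orb_sub fin by (simp add: card_Diff_subset)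
  moreover have compl_stable: "\<forall>p\<in>H. \<forall>y\<in>{1..5} - Orb. p y \<in> {1..5} - Orb"
    using stable apply_in by blast
  ultimately consider "Orb = {1}" | "card Orb = 2" | "card ({1..5} - Orb) = 2" | "card ({1..5} - Orb) = 1"
    using \<open>1 \<in> Orb\<close> fin by (auto simp: card_1_singleton_iff)
  then show ?thesis
  proof cases
    case 1
    then have "\<forall>p\<in>H. p 1 = 1" using stable by blast
    then show ?thesis by force
  next
    case 2
    then show ?thesis using no_pair[OF Orb_sub] stable by auto
  next
    case 3
    then show ?thesis using no_pair[of "{1..5} - Orb"] compl_stable by auto
  next
    case 4
    then obtain w where "{1..5} - Orb = {w}" by (metis card_1_singletonE)
    then show ?thesis using compl_stable by auto
  qed
qed


context group
begin

lemma mult_inv_cancel_left [simp]: "x \<in> carrier G \<Longrightarrow> y \<in> carrier G \<Longrightarrow> x \<otimes> (inv x \<otimes> y) = y"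
  by (simp add: m_assoc[symmetric])

lemma inv_mult_cancel_left [simp]: "x \<in> carrier G \<Longrightarrow> y \<in> carrier G \<Longrightarrow> inv x \<otimes> (x \<otimes> y) = y"
  by (simp add: m_assoc[symmetric])

lemma card_rcosets_subgroup:
  assumes "subgroup H G" "subgroup S G" "H \<subseteq> S"
  shows "card (rcosets\<^bsub>G\<lparr>carrier := S\<rparr>\<^esub> H) * card H = card S"
  using group.lagrange[OF subgroup.subgroup_is_group[OF assms(2) is_group] subgroup_incl[OF assms]]
  by (simp add: order_def)

lemma card_subgroup_dvd:
  assumes "subgroup H G" "subgroup S G" "H \<subseteq> S"
  shows "card H dvd card S"
  using card_rcosets_subgroup[OF assms] by (metis dvd_triv_right)

lemma index2_cosets:
  assumes B: "subgroup B G" and E: "subgroup E G" and BE: "B \<subseteq> E" and fin: "finite E"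
    and card_E: "card E = 2 * card B" and x: "x \<in> E" "x \<notin> B"
  shows "(\<lambda>b. b \<otimes> x) ` B = E - B" "(\<lambda>b. x \<otimes> b) ` B = E - B"
proof -
  have xc: "x \<in> carrier G" and Bc: "B \<subseteq> carrier G" using x E B subgroup.subset by blast+
  have card_compl: "card (E - B) = card B"
    using card_E card_Diff_subset[OF finite_subset[OF BE fin] BE] by simp
  have "b \<otimes> x \<in> E - B \<and> x \<otimes> b \<in> E - B" if b: "b \<in> B" for b
  proof -
    have bc: "b \<in> carrier G" using b Bc by auto
    have "b \<otimes> x \<in> E" "x \<otimes> b \<in> E" using b BE x subgroup.m_closed[OF E] by auto
    moreover have "b \<otimes> x \<notin> B"
      using subgroup.m_closed[OF B subgroup.m_inv_closed[OF B b], of "b \<otimes> x"] x(2) bc xc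
      by (auto simp: m_assoc[symmetric])
    moreover have "x \<otimes> b \<notin> B"
      using subgroup.m_closed[OF B _ subgroup.m_inv_closed[OF B b], of "x \<otimes> b"] x(2) bc xc
      by (auto simp: m_assoc)
    ultimately show ?thesis by auto
  qed
  then have sub: "(\<lambda>b. b \<otimes> x) ` B \<subseteq> E - B" "(\<lambda>b. x \<otimes> b) ` B \<subseteq> E - B" by auto
  have "inj_on (\<lambda>b. b \<otimes> x) B" "inj_on (\<lambda>b. x \<otimes> b) B"
    using Bc xc by (auto intro!: inj_onI simp: subset_iff)
  then have "card ((\<lambda>b. b \<otimes> x) ` B) = card (E - B)" "card ((\<lambda>b. x \<otimes> b) ` B) = card (E - B)"
    using card_compl by (simp_all add: card_image)
  then show "(\<lambda>b. b \<otimes> x) ` B = E - B" "(\<lambda>b. x \<otimes> b) ` B = E - B"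
    using card_subset_eq[OF _ sub(1)] card_subset_eq[OF _ sub(2)] fin by auto
qed

lemma index2_conj_closed:
  assumes B: "subgroup B G" and E: "subgroup E G" and BE: "B \<subseteq> E" and fin: "finite E"
    and card_E: "card E = 2 * card B" and x: "x \<in> E" and b: "b \<in> B"
  shows "x \<otimes> b \<otimes> inv x \<in> B"
proof (cases "x \<in> B")
  case True
  then show ?thesis using b subgroup.m_closed[OF B] subgroup.m_inv_closed[OF B] by auto
next
  case False
  have "x \<otimes> b \<in> E - B" using index2_cosets(2)[OF assms(1-6) False] b by blast
  then obtain b' where b': "b' \<in> B" "x \<otimes> b = b' \<otimes> x"
    using index2_cosets(1)[OF assms(1-6) False] by auto
  have "x \<in> carrier G" using x E subgroup.subset by blast
  then have "x \<otimes> b \<otimes> inv x = b'" using b' subgroup.subset[OF B] by (auto simp: m_assoc)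
  then show ?thesis using b' by simp
qed

text \<open>The commutator of \<open>k\<close> and \<open>m\<close> lies in \<open>K \<inter> M\<close>.\<close>

lemma commute_if_inter_trivial:
  assumes K: "subgroup K G" and M: "subgroup M G" and KM: "K \<inter> M = {\<one>}"
    and K_conj: "\<And>m k. m \<in> M \<Longrightarrow> k \<in> K \<Longrightarrow> m \<otimes> k \<otimes> inv m \<in> K"
    and M_conj: "\<And>k m. k \<in> K \<Longrightarrow> m \<in> M \<Longrightarrow> k \<otimes> m \<otimes> inv k \<in> M"
    and k: "k \<in> K" and m: "m \<in> M"
  shows "k \<otimes> m = m \<otimes> k"
proof -
  have kc: "k \<in> carrier G" and mc: "m \<in> carrier G"
    using k m subgroup.subset[OF K] subgroup.subset[OF M] by auto
  have "k \<otimes> (m \<otimes> inv k \<otimes> inv m) \<in> K"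
    using subgroup.m_closed[OF K k K_conj[OF m subgroup.m_inv_closed[OF K k]]] .
  moreover have "k \<otimes> m \<otimes> inv k \<otimes> inv m \<in> M"
    using subgroup.m_closed[OF M M_conj[OF k m] subgroup.m_inv_closed[OF M m]] .
  ultimately have "k \<otimes> m \<otimes> inv k \<otimes> inv m = \<one>"
    using KM kc mc by (auto simp: m_assoc)
  then have "k \<otimes> m \<otimes> inv k \<otimes> inv m \<otimes> m \<otimes> k = m \<otimes> k" using kc mc by simp
  then show ?thesis using kc mc by (simp add: m_assoc)
qed

lemma unique_decomposition_if_inter_trivial:
  assumes K: "subgroup K G" and M: "subgroup M G" and KM: "K \<inter> M = {\<one>}"
    and "k1 \<in> K" "k2 \<in> K" "m1 \<in> M" "m2 \<in> M" "k1 \<otimes> m1 = k2 \<otimes> m2"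
  shows "k1 = k2 \<and> m1 = m2"
proof -
  have c: "k1 \<in> carrier G" "k2 \<in> carrier G" "m1 \<in> carrier G" "m2 \<in> carrier G"
    using assms(4-7) subgroup.subset[OF K] subgroup.subset[OF M] by auto
  have "inv k2 \<otimes> (k1 \<otimes> m1) \<otimes> inv m1 = inv k2 \<otimes> (k2 \<otimes> m2) \<otimes> inv m1" using assms(8) by simp
  then have "inv k2 \<otimes> k1 = m2 \<otimes> inv m1" using c by (simp add: m_assoc)
  moreover have "inv k2 \<otimes> k1 \<in> K" "m2 \<otimes> inv m1 \<in> M"
    using assms(4-7) K M by (auto intro!: subgroup.m_closed subgroup.m_inv_closed)
  ultimately have "inv k2 \<otimes> k1 = \<one>" "m2 \<otimes> inv m1 = \<one>" using KM by auto
  then show ?thesis using c by (metis inv_closed inv_inv l_inv_ex inv_equality r_inv)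
qed

lemma kernel1_subset:
  assumes "subgroup A G"
  shows "kernel1 G A B \<subseteq> A \<inter> B"
  using subgroup.one_closed[OF assms] subgroup.subset[OF assms] by (force simp: kernel1_def)

lemma subgroup_kernel1:
  assumes A: "subgroup A G" and B: "subgroup B G"
  shows "subgroup (kernel1 G A B) G"
proof (rule subgroupI)
  have Ac: "A \<subseteq> carrier G" using subgroup.subset[OF A] .
  show "kernel1 G A B \<subseteq> carrier G" using kernel1_subset[OF A] Ac by auto
  show "kernel1 G A B \<noteq> {}"
    using subgroup.one_closed[OF A] subgroup.one_closed[OF B] Ac by (force simp: kernel1_def)
  show "inv a \<in> kernel1 G A B" if a: "a \<in> kernel1 G A B" for a
    unfolding kernel1_def
  proof (intro CollectI conjI ballI)
    have aA: "a \<in> A" using a by (simp add: kernel1_def)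
    then show "inv a \<in> A" by (rule subgroup.m_inv_closed[OF A])
    fix h assume h: "h \<in> A"
    have "inv (inv h \<otimes> a \<otimes> h) \<in> B"
      using a h by (rule_tac subgroup.m_inv_closed[OF B]) (simp add: kernel1_def)
    then show "inv h \<otimes> inv a \<otimes> h \<in> B"
      using h aA Ac by (simp add: inv_mult_group m_assoc subset_iff)
  qed
  show "a \<otimes> b \<in> kernel1 G A B" if a: "a \<in> kernel1 G A B" and b: "b \<in> kernel1 G A B" for a b
    unfolding kernel1_def
  proof (intro CollectI conjI ballI)
    have ab: "a \<in> A" "b \<in> A" using a b by (simp_all add: kernel1_def)
    then show "a \<otimes> b \<in> A" by (rule subgroup.m_closed[OF A])
    fix h assume h: "h \<in> A"
    have "(inv h \<otimes> a \<otimes> h) \<otimes> (inv h \<otimes> b \<otimes> h) \<in> B"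
      using a b h by (rule_tac subgroup.m_closed[OF B]) (simp_all add: kernel1_def)
    moreover have "(inv h \<otimes> a \<otimes> h) \<otimes> (inv h \<otimes> b \<otimes> h) = inv h \<otimes> (a \<otimes> b) \<otimes> h"
      using h ab Ac by (simp add: m_assoc subset_iff)
    ultimately show "inv h \<otimes> (a \<otimes> b) \<otimes> h \<in> B" by simp
  qed
qed

lemma kernel1_conj_closed:
  assumes A: "subgroup A G" and g: "g \<in> A" and k: "k \<in> kernel1 G A B"
  shows "g \<otimes> k \<otimes> inv g \<in> kernel1 G A B"
  unfolding kernel1_def
proof (intro CollectI conjI ballI)
  have Ac: "A \<subseteq> carrier G" using subgroup.subset[OF A] .
  have kA: "k \<in> A" using k by (simp add: kernel1_def)
  then show "g \<otimes> k \<otimes> inv g \<in> A"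
    using g by (intro subgroup.m_closed[OF A] subgroup.m_inv_closed[OF A])
  fix h assume h: "h \<in> A"
  have "inv g \<otimes> h \<in> A" using g h by (intro subgroup.m_closed[OF A] subgroup.m_inv_closed[OF A])
  then have "inv (inv g \<otimes> h) \<otimes> k \<otimes> (inv g \<otimes> h) \<in> B" using k by (simp add: kernel1_def)
  then show "inv h \<otimes> (g \<otimes> k \<otimes> inv g) \<otimes> h \<in> B"
    using g h kA Ac by (simp add: inv_mult_group m_assoc subset_iff)
qed

lemma kernel1_conj:
  assumes t: "t \<in> carrier G" and Ac: "A \<subseteq> carrier G"
    and B: "\<And>b. b \<in> carrier G \<Longrightarrow> t \<otimes> b \<otimes> inv t \<in> B \<longleftrightarrow> b \<in> B"
  shows "kernel1 G ((\<lambda>g. t \<otimes> g \<otimes> inv t) ` A) B = (\<lambda>k. t \<otimes> k \<otimes> inv t) ` kernel1 G A B"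
proof -
  have conj_eq: "inv (t \<otimes> h \<otimes> inv t) \<otimes> (t \<otimes> g \<otimes> inv t) \<otimes> (t \<otimes> h \<otimes> inv t)
      = t \<otimes> (inv h \<otimes> g \<otimes> h) \<otimes> inv t" if "g \<in> carrier G" "h \<in> carrier G" for g h
    using that t by (simp add: inv_mult_group m_assoc)
  have "t \<otimes> g \<otimes> inv t \<in> kernel1 G ((\<lambda>g. t \<otimes> g \<otimes> inv t) ` A) B \<longleftrightarrow> g \<in> kernel1 G A B"
    if g: "g \<in> A" for g
    using g Ac conj_eq B by (auto simp: kernel1_def subset_iff)
  moreover have "kernel1 G ((\<lambda>g. t \<otimes> g \<otimes> inv t) ` A) B \<subseteq> (\<lambda>g. t \<otimes> g \<otimes> inv t) ` A"
    by (auto simp: kernel1_def)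
  moreover have "kernel1 G A B \<subseteq> A" by (auto simp: kernel1_def)
  ultimately show ?thesis by (auto simp: image_iff) blast+
qed

end

definition centraliser :: "('a, 'b) monoid_scheme \<Rightarrow> 'a set \<Rightarrow> 'a set \<Rightarrow> 'a set" where
  "centraliser G A S = {g \<in> A. \<forall>k\<in>S. g \<otimes>\<^bsub>G\<^esub> k = k \<otimes>\<^bsub>G\<^esub> g}"

context group
begin

lemma subgroup_centraliser:
  assumes A: "subgroup A G" and S: "S \<subseteq> carrier G"
  shows "subgroup (centraliser G A S) G"
proof (rule subgroupI)
  have Ac: "A \<subseteq> carrier G" using subgroup.subset[OF A] .
  show "centraliser G A S \<subseteq> carrier G" using Ac by (auto simp: centraliser_def)
  show "centraliser G A S \<noteq> {}"
    using subgroup.one_closed[OF A] S by (auto simp: centraliser_def subset_iff)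
  show "inv a \<in> centraliser G A S" if a: "a \<in> centraliser G A S" for a
  proof -
    have aA: "a \<in> A" and ac: "a \<in> carrier G" using a Ac by (auto simp: centraliser_def)
    have "inv a \<otimes> k = k \<otimes> inv a" if "k \<in> S" for k
    proof -
      have "inv a \<otimes> (a \<otimes> k) \<otimes> inv a = inv a \<otimes> (k \<otimes> a) \<otimes> inv a"
        using a that by (simp add: centraliser_def)
      then show ?thesis using ac that S by (auto simp: m_assoc)
    qed
    then show ?thesis using subgroup.m_inv_closed[OF A aA] by (simp add: centraliser_def)
  qed
  show "a \<otimes> b \<in> centraliser G A S" if a: "a \<in> centraliser G A S" and b: "b \<in> centraliser G A S" for a b
  proof -
    have ab: "a \<in> A" "b \<in> A" "a \<in> carrier G" "b \<in> carrier G" using a b Ac by (auto simp: centraliser_def)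
    have "a \<otimes> b \<otimes> k = k \<otimes> (a \<otimes> b)" if k: "k \<in> S" for k
    proof -
      have kc: "k \<in> carrier G" using k S by auto
      have "a \<otimes> b \<otimes> k = a \<otimes> (k \<otimes> b)" using a b k ab kc by (simp add: m_assoc centraliser_def)
      also have "\<dots> = k \<otimes> (a \<otimes> b)" using a k ab kc by (simp add: m_assoc[symmetric] centraliser_def)
      finally show ?thesis .
    qed
    then show ?thesis using subgroup.m_closed[OF A ab(1,2)] by (simp add: centraliser_def)
  qed
qed

lemma centraliser_conj_closed:
  assumes A: "subgroup A G" and S: "S \<subseteq> carrier G"
    and S_conj: "\<And>k. k \<in> S \<Longrightarrow> inv g \<otimes> k \<otimes> g \<in> S"
    and g: "g \<in> A" and c: "c \<in> centraliser G A S"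
  shows "g \<otimes> c \<otimes> inv g \<in> centraliser G A S"
proof -
  have gc: "g \<in> carrier G" and cA: "c \<in> A" and cc: "c \<in> carrier G"
    using g c subgroup.subset[OF A] by (auto simp: centraliser_def)
  have "g \<otimes> c \<otimes> inv g \<otimes> k = k \<otimes> (g \<otimes> c \<otimes> inv g)" if k: "k \<in> S" for k
  proof -
    have kc: "k \<in> carrier G" using k S by auto
    have comm: "c \<otimes> (inv g \<otimes> k \<otimes> g) = (inv g \<otimes> k \<otimes> g) \<otimes> c"
      using c S_conj[OF k] by (simp add: centraliser_def)
    have "g \<otimes> c \<otimes> inv g \<otimes> k = g \<otimes> (c \<otimes> (inv g \<otimes> k \<otimes> g)) \<otimes> inv g"
      using gc cc kc by (simp add: m_assoc)
    also have "\<dots> = g \<otimes> ((inv g \<otimes> k \<otimes> g) \<otimes> c) \<otimes> inv g" by (simp only: comm)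
    also have "\<dots> = k \<otimes> (g \<otimes> c \<otimes> inv g)"
      using gc cc kc by (simp add: m_assoc)
    finally show ?thesis .
  qed
  moreover have "g \<otimes> c \<otimes> inv g \<in> A"
    using g cA by (intro subgroup.m_closed[OF A] subgroup.m_inv_closed[OF A])
  ultimately show ?thesis by (simp add: centraliser_def)
qed

end


lemma wreath_C2_group:
  assumes "group H"
  shows "group (wreath_C2 H)"
proof -
  interpret H: group H by (rule assms)
  have mult: "(a, b, s) \<otimes>\<^bsub>wreath_C2 H\<^esub> (c, d, u) =
      (if s then (a \<otimes>\<^bsub>H\<^esub> d, b \<otimes>\<^bsub>H\<^esub> c, s \<noteq> u) else (a \<otimes>\<^bsub>H\<^esub> c, b \<otimes>\<^bsub>H\<^esub> d, s \<noteq> u))"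
    for a b c d s u
    by (simp add: wreath_C2_def wreath_mult_def)
  have carrier: "carrier (wreath_C2 H) = carrier H \<times> carrier H \<times> UNIV"
    and one: "\<one>\<^bsub>wreath_C2 H\<^esub> = (\<one>\<^bsub>H\<^esub>, \<one>\<^bsub>H\<^esub>, False)"
    by (simp_all add: wreath_C2_def)
  show ?thesis
  proof (rule groupI)
    show "x \<otimes>\<^bsub>wreath_C2 H\<^esub> y \<in> carrier (wreath_C2 H)"
      if "x \<in> carrier (wreath_C2 H)" "y \<in> carrier (wreath_C2 H)" for x y
      using that by (auto simp: carrier mult)
    show "\<one>\<^bsub>wreath_C2 H\<^esub> \<in> carrier (wreath_C2 H)" by (simp add: carrier one)
    show "x \<otimes>\<^bsub>wreath_C2 H\<^esub> y \<otimes>\<^bsub>wreath_C2 H\<^esub> z = x \<otimes>\<^bsub>wreath_C2 H\<^esub> (y \<otimes>\<^bsub>wreath_C2 H\<^esub> z)"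
      if "x \<in> carrier (wreath_C2 H)" "y \<in> carrier (wreath_C2 H)" "z \<in> carrier (wreath_C2 H)" for x y z
      using that by (auto simp: carrier mult H.m_assoc)
    show "\<one>\<^bsub>wreath_C2 H\<^esub> \<otimes>\<^bsub>wreath_C2 H\<^esub> x = x" if "x \<in> carrier (wreath_C2 H)" for x
      using that by (auto simp: carrier mult one)
    show "\<exists>y\<in>carrier (wreath_C2 H). y \<otimes>\<^bsub>wreath_C2 H\<^esub> x = \<one>\<^bsub>wreath_C2 H\<^esub>"
      if x_in: "x \<in> carrier (wreath_C2 H)" for x
    proof -
      obtain a b s where x: "x = (a, b, s)" "a \<in> carrier H" "b \<in> carrier H" using x_in by (auto simp: carrier)
      let ?y = "if s then (inv\<^bsub>H\<^esub> b, inv\<^bsub>H\<^esub> a, s) else (inv\<^bsub>H\<^esub> a, inv\<^bsub>H\<^esub> b, s)"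
      have "?y \<in> carrier (wreath_C2 H)" "?y \<otimes>\<^bsub>wreath_C2 H\<^esub> x = \<one>\<^bsub>wreath_C2 H\<^esub>"
        using x by (auto simp: carrier mult one)
      then show ?thesis by blast
    qed
  qed
qed

section \<open>The amalgam\<close>

locale amalgam_5_2 = group G for G (structure) +
  fixes Gx Ge :: "'a set"
  assumes subgroup_Gx: "subgroup Gx G" and subgroup_Ge: "subgroup Ge G"
    and finite_Gx: "finite Gx" and finite_Ge: "finite Ge"
    and index_Gx: "sub_index G Gx (Gx \<inter> Ge) = 5" and index_Ge: "sub_index G Ge (Gx \<inter> Ge) = 2"
    and Gxy1_trivial: "Gxy1 G Gx Ge = {\<one>}" and Gx1_nontrivial: "Gx1 G Gx Ge \<noteq> {\<one>}"
begin

abbreviation "Gxy \<equiv> Gx \<inter> Ge"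
abbreviation "Kx \<equiv> Gx1 G Gx Ge"
abbreviation "Ky \<equiv> Gy1 G Gx Ge"
abbreviation "t \<equiv> flip_elt G Gx Ge"

lemma subgroup_Gxy: "subgroup Gxy G"
  using subgroups_Inter_pair subgroup_Gx subgroup_Ge by blast

lemma Gx_carrier: "Gx \<subseteq> carrier G"
  using subgroup_Gx subgroup.subset by blast

lemma Ge_carrier: "Ge \<subseteq> carrier G"
  using subgroup_Ge subgroup.subset by blast

lemma card_Gx: "card Gx = 5 * card Gxy"
  using card_rcosets_subgroup[OF subgroup_Gxy subgroup_Gx] index_Gx by (simp add: sub_index_def)

lemma card_Ge: "card Ge = 2 * card Gxy"
  using card_rcosets_subgroup[OF subgroup_Gxy subgroup_Ge] index_Ge by (simp add: sub_index_def)

lemma flip_elt: "t \<in> Ge" "t \<notin> Gx"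
proof -
  have pos: "card Gxy > 0"
    using finite_Gx subgroup.one_closed[OF subgroup_Gxy] by (auto simp: card_gt_0_iff)
  have "\<not> Ge \<subseteq> Gxy"
  proof
    assume "Ge \<subseteq> Gxy"
    then have "Gxy = Ge" by blast
    then show False using card_Ge pos by simp
  qed
  then have "\<exists>x. x \<in> Ge \<and> x \<notin> Gx" by blast
  then have "t \<in> Ge \<and> t \<notin> Gx" unfolding flip_elt_def by (rule someI_ex)
  then show "t \<in> Ge" "t \<notin> Gx" by auto
qed

lemma flip_carrier: "t \<in> carrier G"
  using flip_elt Ge_carrier by auto

lemma Gxy_conj_closed: "g \<in> Ge \<Longrightarrow> b \<in> Gxy \<Longrightarrow> g \<otimes> b \<otimes> inv g \<in> Gxy"
  using index2_conj_closed[OF subgroup_Gxy subgroup_Ge _ finite_Ge card_Ge] by blast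

lemma flip_conj_Gxy_iff: "b \<in> carrier G \<Longrightarrow> t \<otimes> b \<otimes> inv t \<in> Gxy \<longleftrightarrow> b \<in> Gxy"
proof
  assume b: "b \<in> carrier G" "t \<otimes> b \<otimes> inv t \<in> Gxy"
  have "inv t \<otimes> (t \<otimes> b \<otimes> inv t) \<otimes> inv (inv t) \<in> Gxy"
    using subgroup.m_inv_closed[OF subgroup_Ge flip_elt(1)] b(2) by (rule Gxy_conj_closed)
  then show "b \<in> Gxy" using b(1) flip_carrier by (simp add: m_assoc)
qed (use flip_elt Gxy_conj_closed in blast)

lemma flip_inv_conj_Gxy: "b \<in> Gxy \<Longrightarrow> inv t \<otimes> b \<otimes> t \<in> Gxy"
  using flip_conj_Gxy_iff[of "inv t \<otimes> b \<otimes> t"] flip_carrier Gx_carrier by (auto simp: m_assoc)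

lemma Gxy_carrier: "Gxy \<subseteq> carrier G"
  using Gx_carrier by auto

lemma subgroup_Kx: "subgroup Kx G"
  unfolding Gx1_def using subgroup_kernel1[OF subgroup_Gx subgroup_Gxy] .

lemma Kx_subset_Gxy: "Kx \<subseteq> Gxy"
  unfolding Gx1_def using kernel1_subset[OF subgroup_Gx] by auto

lemma Kx_subset_Gx: "Kx \<subseteq> Gx"
  using Kx_subset_Gxy by auto

lemma Kx_carrier: "Kx \<subseteq> carrier G"
  using Kx_subset_Gxy Gxy_carrier by auto

lemma Kx_conj_closed: "g \<in> Gx \<Longrightarrow> k \<in> Kx \<Longrightarrow> g \<otimes> k \<otimes> inv g \<in> Kx"
  unfolding Gx1_def using kernel1_conj_closed[OF subgroup_Gx] .

lemma Kx_inv_conj_closed: "g \<in> Gx \<Longrightarrow> k \<in> Kx \<Longrightarrow> inv g \<otimes> k \<otimes> g \<in> Kx"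
  using Kx_conj_closed[OF subgroup.m_inv_closed[OF subgroup_Gx]] Gx_carrier by fastforce

lemma Ky_eq: "Ky = (\<lambda>k. t \<otimes> k \<otimes> inv t) ` Kx"
  unfolding Gy1_def Gx1_def stab_y_def
  using kernel1_conj[OF flip_carrier Gx_carrier] flip_conj_Gxy_iff by blast

lemma Ky_subset_Gxy: "Ky \<subseteq> Gxy"
proof
  fix m assume "m \<in> Ky"
  then obtain k where "k \<in> Kx" "m = t \<otimes> k \<otimes> inv t" using Ky_eq by auto
  then show "m \<in> Gxy" using Gxy_conj_closed[OF flip_elt(1)] Kx_subset_Gxy by blast
qed

lemma Ky_carrier: "Ky \<subseteq> carrier G"
  using Ky_subset_Gxy Gxy_carrier by auto

lemma subgroup_Ky: "subgroup Ky G"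
proof (rule subgroupI)
  show "Ky \<subseteq> carrier G" by (rule Ky_carrier)
  show "Ky \<noteq> {}" using Ky_eq subgroup.one_closed[OF subgroup_Kx] by auto
  show "inv a \<in> Ky" if "a \<in> Ky" for a
  proof -
    obtain k where k: "k \<in> Kx" "a = t \<otimes> k \<otimes> inv t" using \<open>a \<in> Ky\<close> Ky_eq by auto
    then have "inv a = t \<otimes> inv k \<otimes> inv t"
      using Kx_carrier flip_carrier by (auto simp: inv_mult_group m_assoc)
    then show ?thesis using Ky_eq subgroup.m_inv_closed[OF subgroup_Kx k(1)] by auto
  qed
  show "a \<otimes> b \<in> Ky" if ab: "a \<in> Ky" "b \<in> Ky" for a b
  proof -
    obtain k l where k: "k \<in> Kx" "a = t \<otimes> k \<otimes> inv t" "l \<in> Kx" "b = t \<otimes> l \<otimes> inv t"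
      using ab Ky_eq by auto
    have "k \<in> carrier G" "l \<in> carrier G" using k(1,3) Kx_carrier by auto
    then have "a \<otimes> b = t \<otimes> (k \<otimes> l) \<otimes> inv t"
      using k(2,4) flip_carrier by (simp add: m_assoc)
    then show ?thesis using Ky_eq subgroup.m_closed[OF subgroup_Kx k(1) k(3)] by auto
  qed
qed

lemma Ky_conj_closed: "b \<in> Gxy \<Longrightarrow> m \<in> Ky \<Longrightarrow> b \<otimes> m \<otimes> inv b \<in> Ky"
proof -
  assume b: "b \<in> Gxy" and m: "m \<in> Ky"
  obtain k where k: "k \<in> Kx" "m = t \<otimes> k \<otimes> inv t" using m Ky_eq by auto
  have bc: "b \<in> carrier G" and kc: "k \<in> carrier G" using b k Gxy_carrier Kx_carrier by auto
  have "inv t \<otimes> b \<otimes> t \<in> Gxy"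
    using flip_conj_Gxy_iff[of "inv t \<otimes> b \<otimes> t"] b bc flip_carrier by (simp add: m_assoc)
  then have "(inv t \<otimes> b \<otimes> t) \<otimes> k \<otimes> inv (inv t \<otimes> b \<otimes> t) \<in> Kx"
    using Kx_conj_closed k(1) by auto
  moreover have "b \<otimes> m \<otimes> inv b = t \<otimes> ((inv t \<otimes> b \<otimes> t) \<otimes> k \<otimes> inv (inv t \<otimes> b \<otimes> t)) \<otimes> inv t"
    using k(2) bc kc flip_carrier by (simp add: inv_mult_group m_assoc)
  ultimately show ?thesis using Ky_eq by auto
qed

lemma Kx_Ky_inter: "Kx \<inter> Ky = {\<one>}"
  using Gxy1_trivial by (simp add: Gxy1_def)

lemma Kx_Ky_commute:
  assumes "k \<in> Kx" "m \<in> Ky"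
  shows "k \<otimes> m = m \<otimes> k"
proof (rule commute_if_inter_trivial[OF subgroup_Kx subgroup_Ky Kx_Ky_inter _ _ assms])
  show "m' \<otimes> k' \<otimes> inv m' \<in> Kx" if "m' \<in> Ky" "k' \<in> Kx" for m' k'
    using that Ky_subset_Gxy Kx_conj_closed by blast
  show "k' \<otimes> m' \<otimes> inv k' \<in> Ky" if "k' \<in> Kx" "m' \<in> Ky" for k' m'
    using that Kx_subset_Gxy Ky_conj_closed by blast
qed

lemma Kx_Ky_unique: "k1 \<in> Kx \<Longrightarrow> k2 \<in> Kx \<Longrightarrow> m1 \<in> Ky \<Longrightarrow> m2 \<in> Ky \<Longrightarrow> k1 \<otimes> m1 = k2 \<otimes> m2 \<Longrightarrow> k1 = k2 \<and> m1 = m2"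
  by (rule unique_decomposition_if_inter_trivial[OF subgroup_Kx subgroup_Ky Kx_Ky_inter])

lemma normal_Kx: "Kx \<lhd> G\<lparr>carrier := Gx\<rparr>"
proof -
  have "group (G\<lparr>carrier := Gx\<rparr>)" by (rule subgroup.subgroup_is_group[OF subgroup_Gx is_group])
  moreover have "subgroup Kx (G\<lparr>carrier := Gx\<rparr>)" by (rule subgroup_incl[OF subgroup_Kx subgroup_Gx Kx_subset_Gx])
  ultimately show ?thesis
    using Kx_conj_closed m_inv_consistent[OF subgroup_Gx] by (simp add: group.normal_inv_iff)
qed

lemma flip_conj_inj: "inj_on (\<lambda>k. t \<otimes> k \<otimes> inv t) (carrier G)"
  by (rule inj_onI) (use flip_carrier in \<open>simp add: m_assoc\<close>)

lemma card_Ky: "card Ky = card Kx"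
  unfolding Ky_eq by (rule card_image[OF inj_on_subset[OF flip_conj_inj Kx_carrier]])

lemma finite_Kx: "finite Kx"
  using Kx_subset_Gxy finite_Gx finite_subset by blast

lemma flip_square: "t \<otimes> t \<in> Gxy"
proof (rule ccontr)
  assume nb: "t \<otimes> t \<notin> Gxy"
  have "t \<otimes> t \<in> Ge" using subgroup.m_closed[OF subgroup_Ge flip_elt(1) flip_elt(1)] .
  then have "t \<otimes> t \<in> (\<lambda>b. b \<otimes> t) ` Gxy"
    using index2_cosets(1)[OF subgroup_Gxy subgroup_Ge _ finite_Ge card_Ge flip_elt(1)] nb flip_elt by auto
  then obtain b where b: "b \<in> Gxy" "t \<otimes> t = b \<otimes> t" by auto
  then have "t = b" using flip_carrier Gxy_carrier by auto
  then show False using b flip_elt by auto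
qed

lemma flip_conj_Ky: "m \<in> Ky \<Longrightarrow> t \<otimes> m \<otimes> inv t \<in> Kx"
proof -
  assume "m \<in> Ky"
  then obtain k where k: "k \<in> Kx" "m = t \<otimes> k \<otimes> inv t" using Ky_eq by auto
  have "(t \<otimes> t) \<otimes> k \<otimes> inv (t \<otimes> t) \<in> Kx" using Kx_conj_closed[OF _ k(1)] flip_square by auto
  also have "(t \<otimes> t) \<otimes> k \<otimes> inv (t \<otimes> t) = t \<otimes> m \<otimes> inv t"
    using k Kx_carrier flip_carrier by (auto simp: m_assoc inv_mult_group)
  finally show ?thesis .
qed

lemma flip_inv_conj_Ky: "m \<in> Ky \<Longrightarrow> inv t \<otimes> m \<otimes> t \<in> Kx"
proof -
  assume "m \<in> Ky"
  then obtain k where k: "k \<in> Kx" "m = t \<otimes> k \<otimes> inv t" using Ky_eq by auto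
  then have "inv t \<otimes> m \<otimes> t = k" using Kx_carrier flip_carrier by (simp add: m_assoc subset_iff)
  then show ?thesis using k by simp
qed

end


text \<open>\<open>\<psi>\<close> is the action of \<open>Gx\<close> on the five neighbours of \<open>x\<close>, i.e.\ the quotient map
  \<open>Gx \<rightarrow> Gx/Kx \<cong> A\<^sub>5\<close>.\<close>

locale amalgam_action = amalgam_5_2 +
  fixes \<psi> :: "'a \<Rightarrow> nat \<Rightarrow> nat"
  assumes action_in: "g \<in> Gx \<Longrightarrow> \<psi> g \<in> carrier (alt_group 5)"
    and action_mult: "x \<in> Gx \<Longrightarrow> y \<in> Gx \<Longrightarrow> \<psi> (x \<otimes> y) = \<psi> x \<circ> \<psi> y"
    and action_onto: "\<psi> ` Gx = carrier (alt_group 5)"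
    and action_kernel: "g \<in> Gx \<Longrightarrow> \<psi> g = id \<longleftrightarrow> g \<in> Kx"
begin

lemma one_Gx: "\<one> \<in> Gx" using subgroup.one_closed[OF subgroup_Gx] .

lemma action_one: "\<psi> \<one> = id"
  using action_kernel one_Gx subgroup.one_closed[OF subgroup_Kx] by simp

lemma action_mult_alt: "x \<in> Gx \<Longrightarrow> y \<in> Gx \<Longrightarrow> \<psi> (x \<otimes> y) = \<psi> x \<otimes>\<^bsub>alt_group 5\<^esub> \<psi> y"
  using action_mult by (simp add: alt_group_mult)

lemma action_inv: "g \<in> Gx \<Longrightarrow> \<psi> (inv g) = inv\<^bsub>alt_group 5\<^esub> (\<psi> g)"
proof -
  assume g: "g \<in> Gx"
  have ig: "inv g \<in> Gx" using subgroup.m_inv_closed[OF subgroup_Gx g] .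
  have "\<psi> (inv g) \<otimes>\<^bsub>alt_group 5\<^esub> \<psi> g = \<psi> (inv g \<otimes> g)" using action_mult_alt[OF ig g] by simp
  also have "inv g \<otimes> g = \<one>" using g Gx_carrier by auto
  then have "\<psi> (inv g \<otimes> g) = \<one>\<^bsub>alt_group 5\<^esub>" using action_one by (simp add: alt_group_one)
  finally show ?thesis using alt5.inv_equality action_in g ig by metis
qed

lemma action_eq: "g \<in> Gx \<Longrightarrow> h \<in> Gx \<Longrightarrow> \<psi> g = \<psi> h \<Longrightarrow> g \<otimes> inv h \<in> Kx"
proof -
  assume g: "g \<in> Gx" and h: "h \<in> Gx" and e: "\<psi> g = \<psi> h"
  have ih: "inv h \<in> Gx" using subgroup.m_inv_closed[OF subgroup_Gx h] .
  have "\<psi> (g \<otimes> inv h) = \<psi> h \<otimes>\<^bsub>alt_group 5\<^esub> inv\<^bsub>alt_group 5\<^esub> (\<psi> h)"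
    using action_mult_alt[OF g ih] action_inv[OF h] e by simp
  also have "\<dots> = id" using alt5.r_inv action_in[OF h] by (simp add: alt_group_one)
  finally show ?thesis using action_kernel subgroup.m_closed[OF subgroup_Gx g ih] by blast
qed

lemma action_conj: "g \<in> Gx \<Longrightarrow> x \<in> Gx \<Longrightarrow> \<psi> (g \<otimes> x \<otimes> inv g) = \<psi> g \<circ> \<psi> x \<circ> inv\<^bsub>alt_group 5\<^esub> (\<psi> g)"
proof -
  assume g: "g \<in> Gx" and x: "x \<in> Gx"
  have ig: "inv g \<in> Gx" using subgroup.m_inv_closed[OF subgroup_Gx g] .
  have gx: "g \<otimes> x \<in> Gx" using subgroup.m_closed[OF subgroup_Gx g x] .
  show ?thesis using action_mult[OF gx ig] action_mult[OF g x] action_inv[OF g] by simp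
qed

lemma card_fibres:
  assumes XL: "X \<subseteq> Gx" and cl: "\<forall>x\<in>X. \<forall>k\<in>Kx. k \<otimes> x \<in> X"
  shows "card X = card (\<psi> ` X) * card Kx"
proof -
  define F where "F = (\<lambda>p. {x \<in> X. \<psi> x = p})"
  have XU: "X = (\<Union>p\<in>\<psi> ` X. F p)" by (auto simp: F_def)
  have fX: "finite X" using XL finite_Gx finite_subset by blast
  have Fp: "\<And>x0. x0 \<in> X \<Longrightarrow> F (\<psi> x0) = (\<lambda>k. k \<otimes> x0) ` Kx"
  proof
    fix x0 assume x0: "x0 \<in> X"
    then have x0L: "x0 \<in> Gx" and x0c: "x0 \<in> carrier G" using XL Gx_carrier by auto
    show "F (\<psi> x0) \<subseteq> (\<lambda>k. k \<otimes> x0) ` Kx"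
    proof
      fix x assume "x \<in> F (\<psi> x0)"
      then have x: "x \<in> X" "\<psi> x = \<psi> x0" by (auto simp: F_def)
      then have xc: "x \<in> carrier G" using XL Gx_carrier by auto
      have "x \<otimes> inv x0 \<in> Kx" using action_eq x XL x0L by auto
      moreover have "x = (x \<otimes> inv x0) \<otimes> x0" using xc x0c by (simp add: m_assoc)
      ultimately show "x \<in> (\<lambda>k. k \<otimes> x0) ` Kx" by blast
    qed
    show "(\<lambda>k. k \<otimes> x0) ` Kx \<subseteq> F (\<psi> x0)"
    proof
      fix x assume "x \<in> (\<lambda>k. k \<otimes> x0) ` Kx"
      then obtain k where k: "k \<in> Kx" "x = k \<otimes> x0" by auto
      have "\<psi> x = \<psi> k \<circ> \<psi> x0" using action_mult k x0L Kx_subset_Gx by auto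
      moreover have "\<psi> k = id" using action_kernel k(1) Kx_subset_Gx by auto
      ultimately have "\<psi> x = \<psi> x0" by simp
      moreover have "x \<in> X" using cl k x0 by auto
      ultimately show "x \<in> F (\<psi> x0)" by (simp add: F_def)
    qed
  qed
  have cF: "\<And>p. p \<in> \<psi> ` X \<Longrightarrow> card (F p) = card Kx"
  proof -
    fix p assume "p \<in> \<psi> ` X"
    then obtain x0 where x0: "x0 \<in> X" "p = \<psi> x0" by auto
    have x0c: "x0 \<in> carrier G" using x0 XL Gx_carrier by auto
    have "inj_on (\<lambda>k. k \<otimes> x0) Kx" by (intro inj_onI) (metis Kx_carrier x0c right_cancel subsetD)
    then show "card (F p) = card Kx" using Fp[OF x0(1)] x0(2) card_image by metis
  qed
  have "card X = card (\<Union>p\<in>\<psi> ` X. F p)" using XU by (rule arg_cong)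
  also have "\<dots> = (\<Sum>p\<in>\<psi> ` X. card (F p))"
    using fX by (intro card_UN_disjoint) (auto simp: F_def)
  also have "\<dots> = card (\<psi> ` X) * card Kx" using cF by simp
  finally show ?thesis .
qed

lemma subgroup_action_image: "subgroup X G \<Longrightarrow> X \<subseteq> Gx \<Longrightarrow> subgroup (\<psi> ` X) (alt_group 5)"
proof -
  assume sX: "subgroup X G" and XL: "X \<subseteq> Gx"
  show ?thesis
  proof (rule alt5.subgroupI)
    show "\<psi> ` X \<subseteq> carrier (alt_group 5)" using action_in XL by auto
    show "\<psi> ` X \<noteq> {}" using subgroup.one_closed[OF sX] by auto
  next
    fix a assume "a \<in> \<psi> ` X"
    then obtain x where x: "x \<in> X" "a = \<psi> x" by auto
    have "inv\<^bsub>alt_group 5\<^esub> a = \<psi> (inv x)" using action_inv x XL by auto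
    then show "inv\<^bsub>alt_group 5\<^esub> a \<in> \<psi> ` X" using subgroup.m_inv_closed[OF sX x(1)] by auto
  next
    fix a b assume "a \<in> \<psi> ` X" "b \<in> \<psi> ` X"
    then obtain x y where xy: "x \<in> X" "a = \<psi> x" "y \<in> X" "b = \<psi> y" by auto
    have "a \<otimes>\<^bsub>alt_group 5\<^esub> b = \<psi> (x \<otimes> y)" using action_mult_alt xy XL by (metis subsetD)
    then show "a \<otimes>\<^bsub>alt_group 5\<^esub> b \<in> \<psi> ` X" using subgroup.m_closed[OF sX xy(1) xy(3)] by auto
  qed
qed

lemma inj_on_action_Ky: "inj_on \<psi> Ky"
proof (rule inj_onI)
  fix x y assume xy: "x \<in> Ky" "y \<in> Ky" "\<psi> x = \<psi> y"
  have xL: "x \<in> Gx" "y \<in> Gx" using xy Ky_subset_Gxy by auto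
  have "x \<otimes> inv y \<in> Kx" using action_eq xL xy(3) by auto
  moreover have "x \<otimes> inv y \<in> Ky" using subgroup.m_closed[OF subgroup_Ky xy(1) subgroup.m_inv_closed[OF subgroup_Ky xy(2)]] .
  ultimately have "x \<otimes> inv y = \<one>" using Kx_Ky_inter by auto
  then show "x = y" using xy Ky_carrier by (metis inv_closed inv_equality inv_inv subsetD r_inv)
qed

lemma card_action_Ky: "card (\<psi> ` Ky) = card Kx"
  using card_image[OF inj_on_action_Ky] card_Ky by simp

lemma card_Gxy_action: "card Gxy = card (\<psi> ` Gxy) * card Kx"
proof (rule card_fibres)
  show "Gxy \<subseteq> Gx" by auto
  show "\<forall>x\<in>Gxy. \<forall>k\<in>Kx. k \<otimes> x \<in> Gxy" using subgroup.m_closed[OF subgroup_Gxy] Kx_subset_Gxy by blast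
qed

lemma card_Gx_action: "card Gx = 60 * card Kx"
proof -
  have "card Gx = card (\<psi> ` Gx) * card Kx"
    by (rule card_fibres) (use subgroup.m_closed[OF subgroup_Gx] Kx_subset_Gx in blast)+
  then show ?thesis using action_onto card_alt_group5 by simp
qed

lemma card_action_Gxy: "card (\<psi> ` Gxy) = 12"
proof -
  have "card Kx > 0" using finite_Kx subgroup.one_closed[OF subgroup_Kx] card_gt_0_iff by blast
  moreover have "card Gx = 5 * card Gxy" by (rule card_Gx)
  ultimately show ?thesis using card_Gx_action card_Gxy_action by simp
qed

end



context amalgam_5_2 begin

lemma action_exists:
  assumes hA: "G\<lparr>carrier := Gx\<rparr> Mod Kx \<cong> alt_group 5"
  shows "\<exists>\<psi>. amalgam_action G Gx Ge \<psi>"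
proof -
  define L' where "L' = G\<lparr>carrier := Gx\<rparr>"
  obtain \<phi> where phi: "\<phi> \<in> iso (L' Mod Kx) (alt_group 5)" using hA unfolding is_iso_def L'_def by auto
  have nK: "Kx \<lhd> L'" unfolding L'_def by (rule normal_Kx)
  have gM: "group (L' Mod Kx)" using normal.factorgroup_is_group[OF nK] .
  have ghom: "group_hom (L' Mod Kx) (alt_group 5) \<phi>"
    using gM alt_group_is_group phi by (simp add: group_hom_def group_hom_axioms_def iso_def)
  have rc: "\<And>g. Kx #>\<^bsub>L'\<^esub> g = Kx #> g" by (simp add: L'_def r_coset_def)
  have coshom: "(\<lambda>a. Kx #>\<^bsub>L'\<^esub> a) \<in> hom L' (L' Mod Kx)" using normal.r_coset_hom_Mod[OF nK] .
  define \<psi> where "\<psi> = (\<lambda>g. \<phi> (Kx #> g))"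
  have carM: "carrier (L' Mod Kx) = (\<lambda>g. Kx #> g) ` Gx"
    using carrier_FactGroup[of L' Kx] rc by (simp add: L'_def)
  have bij: "bij_betw \<phi> (carrier (L' Mod Kx)) (carrier (alt_group 5))" using phi by (simp add: iso_def)
  have "amalgam_action G Gx Ge \<psi>"
  proof
    fix g assume "g \<in> Gx"
    then have "Kx #> g \<in> carrier (L' Mod Kx)" using carM by auto
    then show "\<psi> g \<in> carrier (alt_group 5)" unfolding \<psi>_def using bij bij_betwE by blast
  next
    fix x y assume xy: "x \<in> Gx" "y \<in> Gx"
    have "Kx #> (x \<otimes> y) = (Kx #> x) \<otimes>\<^bsub>L' Mod Kx\<^esub> (Kx #> y)"
      using coshom xy rc by (simp add: hom_def L'_def)
    moreover have "Kx #> x \<in> carrier (L' Mod Kx)" "Kx #> y \<in> carrier (L' Mod Kx)" using carM xy by auto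
    ultimately show "\<psi> (x \<otimes> y) = \<psi> x \<circ> \<psi> y"
      unfolding \<psi>_def using group_hom.hom_mult[OF ghom] by (simp add: alt_group_mult)
  next
    show "\<psi> ` Gx = carrier (alt_group 5)" using bij carM unfolding \<psi>_def bij_betw_def by (simp add: image_image)
  next
    fix g assume g: "g \<in> Gx"
    have one: "\<phi> Kx = id" using group_hom.hom_one[OF ghom] by (simp add: alt_group_one)
    have Kin: "Kx \<in> carrier (L' Mod Kx)" using monoid.one_closed[OF group.is_monoid[OF gM]] by simp
    have gin: "Kx #> g \<in> carrier (L' Mod Kx)" using carM g by auto
    have "\<psi> g = id \<longleftrightarrow> Kx #> g = Kx"
      unfolding \<psi>_def using one bij Kin gin by (metis bij_betw_def inj_on_eq_iff)
    also have "\<dots> \<longleftrightarrow> g \<in> Kx"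
      using coset_join1[of Kx g] coset_join2[of g Kx] subgroup_Kx g Gx_carrier by blast
    finally show "\<psi> g = id \<longleftrightarrow> g \<in> Kx" .
  qed
  then show ?thesis by blast
qed

lemma action_conj_by:
  assumes P: "amalgam_action G Gx Ge \<psi>" and c: "c \<in> carrier (alt_group 5)"
  shows "amalgam_action G Gx Ge (\<lambda>g. c \<circ> \<psi> g \<circ> inv' c)"
proof -
  interpret P: amalgam_action G Gx Ge \<psi> by (rule P)
  have "c permutes {1..5}" using c by (simp add: alt_group_carrier)
  then have inv_c: "\<And>z. c (inv' c z) = z" "\<And>z. inv' c (c z) = z"
    by (simp_all add: permutes_inverses)
  show ?thesis
  proof
    show "c \<circ> \<psi> g \<circ> inv' c \<in> carrier (alt_group 5)" if "g \<in> Gx" for g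
      using alt_group5_conj_closed[OF c P.action_in[OF that]] .
    show "c \<circ> \<psi> (x \<otimes> y) \<circ> inv' c = (c \<circ> \<psi> x \<circ> inv' c) \<circ> (c \<circ> \<psi> y \<circ> inv' c)"
      if "x \<in> Gx" "y \<in> Gx" for x y
      using P.action_mult[OF that] inv_c by (simp add: fun_eq_iff)
    show "c \<circ> \<psi> g \<circ> inv' c = id \<longleftrightarrow> g \<in> Kx" if "g \<in> Gx" for g
      using P.action_kernel[OF that] inv_c by (auto simp: fun_eq_iff) (metis inv_c(2))
    have "p \<in> (\<lambda>g. c \<circ> \<psi> g \<circ> inv' c) ` Gx" if p: "p \<in> carrier (alt_group 5)" for p
    proof -
      have "inv' c \<circ> p \<circ> c \<in> \<psi> ` Gx"
        using alt_group_comp_closed[OF alt_group_comp_closed[OF alt_group_inv_closed[OF c] p] c]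
          P.action_onto by simp
      then obtain g where "g \<in> Gx" "\<psi> g = inv' c \<circ> p \<circ> c" by auto
      moreover have "c \<circ> (inv' c \<circ> p \<circ> c) \<circ> inv' c = p" using inv_c by (simp add: fun_eq_iff)
      ultimately show ?thesis by (metis image_eqI)
    qed
    then show "(\<lambda>g. c \<circ> \<psi> g \<circ> inv' c) ` Gx = carrier (alt_group 5)"
      using alt_group5_conj_closed[OF c] P.action_in by auto
  qed
qed

lemma action_exists_A4:
  assumes hA: "G\<lparr>carrier := Gx\<rparr> Mod Kx \<cong> alt_group 5"
  shows "\<exists>\<psi>. amalgam_action G Gx Ge \<psi> \<and> \<psi> ` Gxy = carrier (alt_group 4)"
proof -
  obtain \<psi> where P: "amalgam_action G Gx Ge \<psi>" using action_exists[OF hA] by blast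
  interpret P: amalgam_action G Gx Ge \<psi> by (rule P)
  have sH: "subgroup (\<psi> ` Gxy) (alt_group 5)" using P.subgroup_action_image[OF subgroup_Gxy] by auto
  obtain i where i: "i \<in> {1..5}" "\<forall>p\<in>\<psi> ` Gxy. p i = i"
    using alt_group5_order12_subgroup_fixpoint[OF sH P.card_action_Gxy] by blast
  obtain c where c: "c \<in> carrier (alt_group 5)" "c i = 5" using alt_group5_transitive[OF i(1)] by blast
  define \<psi>' where "\<psi>' = (\<lambda>g. c \<circ> \<psi> g \<circ> inv' c)"
  have P': "amalgam_action G Gx Ge \<psi>'" unfolding \<psi>'_def by (rule action_conj_by[OF P c(1)])
  interpret P': amalgam_action G Gx Ge \<psi>' by (rule P')
  have ic: "inv' c 5 = i"
    using c permutes_inverses(2)[of c "{1..5}" i] by (simp add: alt_group_carrier)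
  have sub: "\<psi>' ` Gxy \<subseteq> carrier (alt_group 4)"
  proof
    fix p assume "p \<in> \<psi>' ` Gxy"
    then obtain b where b: "b \<in> Gxy" "p = \<psi>' b" by auto
    have "p \<in> carrier (alt_group 5)" using b P'.action_in by auto
    moreover have "p 5 = 5" using b ic i(2) c(2) by (simp add: \<psi>'_def)
    ultimately show "p \<in> carrier (alt_group 4)" using carrier_alt_group_stabiliser[of 4] by auto
  qed
  then have "\<psi>' ` Gxy = carrier (alt_group 4)"
    using card_subset_eq[OF finite_carrier_alt_group sub] P'.card_action_Gxy card_alt_group4 by simp
  then show ?thesis using P' by blast
qed

end



lemma multiple_of_4_dvd_12: "(4::nat) dvd n \<Longrightarrow> n dvd 12 \<Longrightarrow> n = 4 \<or> n = 12"
proof -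
  assume "4 dvd n" "n dvd 12"
  then obtain k where n: "n = 4 * k" and k: "k dvd 3" by (auto elim: dvdE)
  then have "k \<in> {0, 1, 2, 3}" using dvd_imp_le[OF k] by auto
  then show ?thesis using n k by (auto simp: dvd_eq_mod_eq_0)
qed

locale amalgam_action_A4 = amalgam_action +
  assumes action_Gxy: "\<psi> ` Gxy = carrier (alt_group 4)"
begin

abbreviation "N \<equiv> \<psi> ` Ky"

lemma N_subset_A4: "N \<subseteq> carrier (alt_group 4)" using Ky_subset_Gxy action_Gxy by auto

lemma subgroup_N: "subgroup N (alt_group 5)"
  using subgroup_action_image[OF subgroup_Ky] Ky_subset_Gxy by auto

lemma subgroup_A4: "subgroup (carrier (alt_group 4)) (alt_group 5)"
  using subgroup_action_image[OF subgroup_Gxy] action_Gxy by auto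

lemma N_conj_closed:
  assumes g: "g \<in> carrier (alt_group 4)" and x: "x \<in> N"
  shows "g \<circ> x \<circ> inv' g \<in> N"
proof -
  obtain b where b: "b \<in> Gxy" "g = \<psi> b" using g action_Gxy by auto
  obtain m where m: "m \<in> Ky" "x = \<psi> m" using x by auto
  have "\<psi> (b \<otimes> m \<otimes> inv b) = g \<circ> x \<circ> inv' g"
    using action_conj b m Ky_subset_Gxy action_in alt_group_inv_equality by auto
  moreover have "b \<otimes> m \<otimes> inv b \<in> Ky" using Ky_conj_closed b m by auto
  ultimately show ?thesis by (metis image_eqI)
qed

lemma N_nontriv: "\<exists>n\<in>N. n \<noteq> id"
proof -
  obtain k where k: "k \<in> Kx" "k \<noteq> \<one>" using Gx1_nontrivial subgroup.one_closed[OF subgroup_Kx] by blast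
  have kc: "k \<in> carrier G" using k Kx_carrier by auto
  define m where "m = t \<otimes> k \<otimes> inv t"
  have m: "m \<in> Ky" using k Ky_eq m_def by auto
  have "m \<noteq> \<one>"
  proof
    assume "m = \<one>"
    then have "t \<otimes> k \<otimes> inv t = t \<otimes> \<one> \<otimes> inv t" using flip_carrier by (simp add: m_def)
    then show False using flip_conj_inj kc flip_carrier k(2) by (metis inj_on_eq_iff one_closed)
  qed
  then have "m \<notin> Kx" using m Kx_Ky_inter by auto
  then have "\<psi> m \<noteq> id" using action_kernel m Ky_subset_Gxy by auto
  then show ?thesis using m by auto
qed

lemma klein4_subset_N: "klein4 \<subseteq> N"
  using klein4_subset_normal[OF N_subset_A4 _ N_conj_closed] subgroup.m_closed[OF subgroup_N] N_nontriv
  by (auto simp: alt_group_mult)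

lemma card_Kx_cases: "card Kx = 4 \<or> card Kx = 12"
proof -
  have "card N dvd card (carrier (alt_group 4))" using alt5.card_subgroup_dvd[OF subgroup_N subgroup_A4 N_subset_A4] .
  moreover have "card (klein4) dvd card N" using alt5.card_subgroup_dvd[OF klein4_subgroup subgroup_N klein4_subset_N] .
  ultimately show ?thesis using card_action_Ky card_klein4 card_alt_group4 multiple_of_4_dvd_12 by simp
qed

abbreviation "Cx \<equiv> centraliser G Gx Kx"

lemma Cx_subset_Gx: "Cx \<subseteq> Gx"
  by (auto simp: centraliser_def)

lemma subgroup_Cx: "subgroup Cx G"
  using subgroup_centraliser[OF subgroup_Gx Kx_carrier] .

lemma Cx_conj_closed: "g \<in> Gx \<Longrightarrow> c \<in> Cx \<Longrightarrow> g \<otimes> c \<otimes> inv g \<in> Cx"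
  using centraliser_conj_closed[OF subgroup_Gx Kx_carrier] Kx_inv_conj_closed by blast

lemma Ky_subset_Cx: "Ky \<subseteq> Cx"
  using Ky_subset_Gxy Kx_Ky_commute by (auto simp: centraliser_def)

lemma action_Cx: "\<psi> ` Cx = carrier (alt_group 5)"
proof (rule alt_group5_normal_subgroup_eq)
  have "p \<otimes>\<^bsub>alt_group 5\<^esub> x \<otimes>\<^bsub>alt_group 5\<^esub> inv\<^bsub>alt_group 5\<^esub> p \<in> \<psi> ` Cx"
    if p: "p \<in> carrier (alt_group 5)" and x: "x \<in> \<psi> ` Cx" for p x
  proof -
    obtain g where g: "g \<in> Gx" "p = \<psi> g" using p action_onto by (metis imageE)
    obtain c where c: "c \<in> Cx" "x = \<psi> c" using x by auto
    have "\<psi> (g \<otimes> c \<otimes> inv g) = p \<otimes>\<^bsub>alt_group 5\<^esub> x \<otimes>\<^bsub>alt_group 5\<^esub> inv\<^bsub>alt_group 5\<^esub> p"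
      using action_conj g c Cx_subset_Gx by (auto simp: alt_group_mult)
    then show ?thesis using Cx_conj_closed[OF g(1) c(1)] by (metis image_eqI)
  qed
  then show "\<psi> ` Cx \<lhd> alt_group 5"
    using subgroup_action_image[OF subgroup_Cx Cx_subset_Gx] by (simp add: alt5.normal_inv_iff)
  show "perm_of_list [2,1,4,3,5] \<in> \<psi> ` Cx"
    using klein4_double_transposition klein4_subset_N Ky_subset_Cx by auto
qed

text \<open>If \<open>Kx\<close> had order 4, then \<open>Ky \<cong> \<psi> ` Ky = V\<^sub>4\<close> and hence \<open>Kx\<close> would be abelian, so
  \<open>Kx\<close> would be central in \<open>Gx = Cx Kx\<close>; conjugating by \<open>t\<close>, \<open>Ky\<close> would be central in \<open>Gxy\<close>,
  whereas \<open>\<psi> ` Gxy = A\<^sub>4\<close> does not centralise \<open>V\<^sub>4\<close>.\<close>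

lemma N_eq_klein4_if_card_4: "card Kx = 4 \<Longrightarrow> N = klein4"
  using card_subset_eq[OF finite_subset[OF N_subset_A4 finite_carrier_alt_group] klein4_subset_N]
    card_klein4 card_action_Ky by simp

lemma Ky_comm_if_card_4:
  assumes "card Kx = 4" "m1 \<in> Ky" "m2 \<in> Ky"
  shows "m1 \<otimes> m2 = m2 \<otimes> m1"
proof -
  have m: "m1 \<in> Gx" "m2 \<in> Gx" using assms(2,3) Ky_subset_Gxy by auto
  have "\<psi> m1 \<circ> \<psi> m2 = \<psi> m2 \<circ> \<psi> m1"
    using N_eq_klein4_if_card_4[OF assms(1)] assms(2,3) by (intro klein4_comm) auto
  then have "\<psi> (m1 \<otimes> m2) = \<psi> (m2 \<otimes> m1)" using action_mult[OF m] action_mult[OF m(2,1)] by simp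
  then show ?thesis
    using inj_onD[OF inj_on_action_Ky] subgroup.m_closed[OF subgroup_Ky] assms(2,3) by blast
qed

lemma Kx_subset_Cx_if_card_4:
  assumes "card Kx = 4"
  shows "Kx \<subseteq> Cx"
proof -
  have "k1 \<otimes> k2 = k2 \<otimes> k1" if k: "k1 \<in> Kx" "k2 \<in> Kx" for k1 k2
  proof -
    have kc: "k1 \<in> carrier G" "k2 \<in> carrier G" using k Kx_carrier by auto
    have "t \<otimes> k1 \<otimes> inv t \<in> Ky" "t \<otimes> k2 \<otimes> inv t \<in> Ky" using Ky_eq k by auto
    then have "(t \<otimes> k1 \<otimes> inv t) \<otimes> (t \<otimes> k2 \<otimes> inv t) = (t \<otimes> k2 \<otimes> inv t) \<otimes> (t \<otimes> k1 \<otimes> inv t)"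
      by (rule Ky_comm_if_card_4[OF assms])
    then have "t \<otimes> (k1 \<otimes> k2) \<otimes> inv t = t \<otimes> (k2 \<otimes> k1) \<otimes> inv t"
      using kc flip_carrier by (simp add: m_assoc)
    then show ?thesis using inj_onD[OF flip_conj_inj] kc by simp
  qed
  then show ?thesis using Kx_subset_Gx by (auto simp: centraliser_def)
qed

lemma Gx_subset_Cx_if_card_4:
  assumes "card Kx = 4"
  shows "Gx \<subseteq> Cx"
proof
  fix g assume g: "g \<in> Gx"
  then obtain c where c: "c \<in> Cx" "\<psi> g = \<psi> c" using action_Cx action_in by (metis imageE)
  have cG: "c \<in> Gx" using c Cx_subset_Gx by auto
  have "g \<otimes> inv c \<in> Cx" using action_eq[OF g cG c(2)] Kx_subset_Cx_if_card_4[OF assms] by auto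
  then have "g \<otimes> inv c \<otimes> c \<in> Cx" using subgroup.m_closed[OF subgroup_Cx _ c(1)] by blast
  then show "g \<in> Cx" using g cG Gx_carrier by (simp add: m_assoc subset_iff)
qed

lemma card_Kx_ne_4: "card Kx \<noteq> 4"
proof
  assume card_4: "card Kx = 4"
  obtain b where b: "b \<in> Gxy" "\<psi> b = perm_of_list [2,3,1,4,5]"
    using generators_in_alt_group4(1) action_Gxy by (metis imageE)
  obtain m where m: "m \<in> Ky" "\<psi> m = perm_of_list [2,1,4,3,5]"
    using klein4_double_transposition N_eq_klein4_if_card_4[OF card_4] by (metis imageE)
  obtain k where k: "k \<in> Kx" "m = t \<otimes> k \<otimes> inv t" using m Ky_eq by auto
  have kc: "k \<in> carrier G" and bc: "b \<in> carrier G" using k b Kx_carrier Gxy_carrier by auto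
  have "inv t \<otimes> b \<otimes> t \<in> Cx" using flip_inv_conj_Gxy[OF b(1)] Gx_subset_Cx_if_card_4[OF card_4] by auto
  then have comm: "(inv t \<otimes> b \<otimes> t) \<otimes> k = k \<otimes> (inv t \<otimes> b \<otimes> t)" using k by (auto simp: centraliser_def)
  have "b \<otimes> m = t \<otimes> ((inv t \<otimes> b \<otimes> t) \<otimes> k) \<otimes> inv t" using k(2) kc bc flip_carrier by (simp add: m_assoc)
  also have "\<dots> = t \<otimes> (k \<otimes> (inv t \<otimes> b \<otimes> t)) \<otimes> inv t" by (simp only: comm)
  also have "\<dots> = m \<otimes> b" using k(2) kc bc flip_carrier by (simp add: m_assoc)
  finally have "\<psi> b \<circ> \<psi> m = \<psi> m \<circ> \<psi> b" using action_mult b m Ky_subset_Gxy by (metis IntD1 subsetD)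
  then show False using b(2) m(2) klein4_not_central by simp
qed

end



context amalgam_action_A4
begin

lemma card_Kx: "card Kx = 12"
  using card_Kx_cases card_Kx_ne_4 by blast

lemma N_eq_A4: "N = carrier (alt_group 4)"
  using card_subset_eq[OF finite_carrier_alt_group N_subset_A4] card_action_Ky card_Kx card_alt_group4
  by simp

text \<open>Conjugation by \<open>t\<close> moves \<open>Cx \<inter> Kx\<close> into the centre of \<open>Ky \<cong> A\<^sub>4\<close>.\<close>

lemma Cx_Kx_inter: "Cx \<inter> Kx = {\<one>}"
proof
  show "{\<one>} \<subseteq> Cx \<inter> Kx" using subgroup.one_closed[OF subgroup_Cx] subgroup.one_closed[OF subgroup_Kx] by auto
  show "Cx \<inter> Kx \<subseteq> {\<one>}"
  proof
    fix z assume z: "z \<in> Cx \<inter> Kx"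
    then have zc: "z \<in> carrier G" using Kx_carrier by auto
    define mz where "mz = t \<otimes> z \<otimes> inv t"
    have mz: "mz \<in> Ky" using z Ky_eq mz_def by auto
    have mzL: "mz \<in> Gx" using mz Ky_subset_Gxy by auto
    have comm: "\<forall>g\<in>carrier (alt_group 4). \<psi> mz \<circ> g = g \<circ> \<psi> mz"
    proof
      fix g assume "g \<in> carrier (alt_group 4)"
      then have "g \<in> N" using N_eq_A4 by simp
      then obtain m where m: "m \<in> Ky" "g = \<psi> m" by auto
      then obtain k where k: "k \<in> Kx" "m = t \<otimes> k \<otimes> inv t" using Ky_eq by auto
      have kc: "k \<in> carrier G" using k Kx_carrier by auto
      have e: "z \<otimes> k = k \<otimes> z" using z k by (auto simp: centraliser_def)
      have "mz \<otimes> m = t \<otimes> (z \<otimes> k) \<otimes> inv t" using k(2) zc kc flip_carrier by (simp add: mz_def m_assoc)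
      also have "\<dots> = t \<otimes> (k \<otimes> z) \<otimes> inv t" using e by simp
      also have "\<dots> = m \<otimes> mz" using k(2) zc kc flip_carrier by (simp add: mz_def m_assoc)
      finally have "mz \<otimes> m = m \<otimes> mz" .
      moreover have "m \<in> Gx" using m Ky_subset_Gxy by auto
      ultimately have "\<psi> (mz \<otimes> m) = \<psi> (m \<otimes> mz)" by simp
      then show "\<psi> mz \<circ> g = g \<circ> \<psi> mz" using action_mult[OF mzL \<open>m \<in> Gx\<close>] action_mult[OF \<open>m \<in> Gx\<close> mzL] m(2) by simp
    qed
    have "\<psi> mz \<in> carrier (alt_group 4)" using mz N_eq_A4 by auto
    then have "\<psi> mz = id" using alt_group4_centre_trivial comm by blast
    then have "mz \<in> Kx" using action_kernel mzL by simp
    then have "mz = \<one>" using mz Kx_Ky_inter by auto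
    then have "t \<otimes> z \<otimes> inv t = t \<otimes> \<one> \<otimes> inv t" using flip_carrier by (simp add: mz_def)
    then show "z \<in> {\<one>}" using inj_onD[OF flip_conj_inj] zc by auto
  qed
qed

lemma inj_on_action_Cx: "inj_on \<psi> Cx"
proof (rule inj_onI)
  fix x y assume xy: "x \<in> Cx" "y \<in> Cx" "\<psi> x = \<psi> y"
  have xL: "x \<in> Gx" "y \<in> Gx" using xy Cx_subset_Gx by auto
  have "x \<otimes> inv y \<in> Kx" using action_eq xL xy(3) by auto
  moreover have "x \<otimes> inv y \<in> Cx" using subgroup.m_closed[OF subgroup_Cx xy(1) subgroup.m_inv_closed[OF subgroup_Cx xy(2)]] .
  ultimately have "x \<otimes> inv y = \<one>" using Cx_Kx_inter by auto
  then show "x = y" using xy xL Gx_carrier by (metis inv_closed inv_equality inv_inv subsetD r_inv)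
qed

definition lift_Cx where "lift_Cx = inv_into Cx \<psi>"
definition lift_Ky where "lift_Ky = inv_into Ky \<psi>"
definition iso_Kx where "iso_Kx = (\<lambda>q. inv t \<otimes> lift_Ky q \<otimes> t)"

lemma lift_Cx: "p \<in> carrier (alt_group 5) \<Longrightarrow> lift_Cx p \<in> Cx \<and> \<psi> (lift_Cx p) = p"
  using action_Cx by (auto simp: lift_Cx_def inv_into_into f_inv_into_f)

lemma lift_Ky: "q \<in> carrier (alt_group 4) \<Longrightarrow> lift_Ky q \<in> Ky \<and> \<psi> (lift_Ky q) = q"
  using N_eq_A4 by (auto simp: lift_Ky_def inv_into_into f_inv_into_f)

lemma iso_Kx_in_Kx: "q \<in> carrier (alt_group 4) \<Longrightarrow> iso_Kx q \<in> Kx"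
  using lift_Ky flip_inv_conj_Ky by (simp add: iso_Kx_def)

lemma iso_Kx_carrier: "q \<in> carrier (alt_group 4) \<Longrightarrow> iso_Kx q \<in> carrier G"
  using iso_Kx_in_Kx Kx_carrier by auto

lemma lift_Cx_carrier: "p \<in> carrier (alt_group 5) \<Longrightarrow> lift_Cx p \<in> carrier G"
  using lift_Cx Cx_subset_Gx Gx_carrier by blast

lemma lift_Ky_mult: "q \<in> carrier (alt_group 4) \<Longrightarrow> q' \<in> carrier (alt_group 4) \<Longrightarrow> lift_Ky (q \<circ> q') = lift_Ky q \<otimes> lift_Ky q'"
proof -
  assume q: "q \<in> carrier (alt_group 4)" "q' \<in> carrier (alt_group 4)"
  have m: "lift_Ky q \<in> Ky" "lift_Ky q' \<in> Ky" using lift_Ky q by auto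
  have mL: "lift_Ky q \<in> Gx" "lift_Ky q' \<in> Gx" using m Ky_subset_Gxy by auto
  have "\<psi> (lift_Ky q \<otimes> lift_Ky q') = q \<circ> q'" using action_mult[OF mL] lift_Ky q by simp
  moreover have "lift_Ky q \<otimes> lift_Ky q' \<in> Ky" using subgroup.m_closed[OF subgroup_Ky m] .
  moreover have "lift_Ky (q \<circ> q') \<in> Ky" "\<psi> (lift_Ky (q \<circ> q')) = q \<circ> q'" using lift_Ky alt_group_comp_closed[OF q] by auto
  ultimately show ?thesis using inj_onD[OF inj_on_action_Ky] by metis
qed

lemma iso_Kx_mult: "q \<in> carrier (alt_group 4) \<Longrightarrow> q' \<in> carrier (alt_group 4) \<Longrightarrow> iso_Kx (q \<circ> q') = iso_Kx q \<otimes> iso_Kx q'"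
proof -
  assume q: "q \<in> carrier (alt_group 4)" "q' \<in> carrier (alt_group 4)"
  have mc: "lift_Ky q \<in> carrier G" "lift_Ky q' \<in> carrier G" using lift_Ky q Ky_carrier by auto
  show ?thesis using lift_Ky_mult[OF q] mc flip_carrier by (simp add: iso_Kx_def m_assoc)
qed

lemma inj_on_iso_Kx: "inj_on iso_Kx (carrier (alt_group 4))"
proof (rule inj_onI)
  fix q q' assume q: "q \<in> carrier (alt_group 4)" "q' \<in> carrier (alt_group 4)" "iso_Kx q = iso_Kx q'"
  have mc: "lift_Ky q \<in> carrier G" "lift_Ky q' \<in> carrier G" using lift_Ky q Ky_carrier by auto
  have "t \<otimes> iso_Kx q \<otimes> inv t = t \<otimes> iso_Kx q' \<otimes> inv t" using q(3) by simp
  then have "lift_Ky q = lift_Ky q'" using mc flip_carrier by (simp add: iso_Kx_def m_assoc)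
  then show "q = q'" using lift_Ky q by metis
qed

lemma lift_Cx_mult: "p \<in> carrier (alt_group 5) \<Longrightarrow> p' \<in> carrier (alt_group 5) \<Longrightarrow> lift_Cx (p \<circ> p') = lift_Cx p \<otimes> lift_Cx p'"
proof -
  assume p: "p \<in> carrier (alt_group 5)" "p' \<in> carrier (alt_group 5)"
  have c: "lift_Cx p \<in> Cx" "lift_Cx p' \<in> Cx" using lift_Cx p by auto
  have cL: "lift_Cx p \<in> Gx" "lift_Cx p' \<in> Gx" using c Cx_subset_Gx by auto
  have "\<psi> (lift_Cx p \<otimes> lift_Cx p') = p \<circ> p'" using action_mult[OF cL] lift_Cx p by simp
  moreover have "lift_Cx p \<otimes> lift_Cx p' \<in> Cx" using subgroup.m_closed[OF subgroup_Cx c] .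
  moreover have "p \<circ> p' \<in> carrier (alt_group 5)" using alt5.m_closed p by (simp add: alt_group_mult)
  ultimately show ?thesis using lift_Cx inj_onD[OF inj_on_action_Cx] by metis
qed

lemma lift_Cx_iso_Kx_commute: "p \<in> carrier (alt_group 5) \<Longrightarrow> q \<in> carrier (alt_group 4) \<Longrightarrow> lift_Cx p \<otimes> iso_Kx q = iso_Kx q \<otimes> lift_Cx p"
  using lift_Cx iso_Kx_in_Kx by (auto simp: centraliser_def)

definition Gx_prod_map where "Gx_prod_map = (\<lambda>(p, q). lift_Cx p \<otimes> iso_Kx q)"

lemma Gx_prod_map_hom: "Gx_prod_map \<in> hom (alt_group 5 \<times>\<times> alt_group 4) (G\<lparr>carrier := Gx\<rparr>)"
proof (rule homI)
  fix x assume "x \<in> carrier (alt_group 5 \<times>\<times> alt_group 4)"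
  then obtain p q where pq: "x = (p, q)" "p \<in> carrier (alt_group 5)" "q \<in> carrier (alt_group 4)" by (auto simp: DirProd_def)
  have "lift_Cx p \<in> Gx" "iso_Kx q \<in> Gx" using lift_Cx pq Cx_subset_Gx iso_Kx_in_Kx Kx_subset_Gx by auto
  then show "Gx_prod_map x \<in> carrier (G\<lparr>carrier := Gx\<rparr>)" using pq subgroup.m_closed[OF subgroup_Gx] by (simp add: Gx_prod_map_def)
next
  fix x y assume "x \<in> carrier (alt_group 5 \<times>\<times> alt_group 4)" "y \<in> carrier (alt_group 5 \<times>\<times> alt_group 4)"
  then obtain p q p' q' where pq: "x = (p, q)" "p \<in> carrier (alt_group 5)" "q \<in> carrier (alt_group 4)" "y = (p', q')" "p' \<in> carrier (alt_group 5)" "q' \<in> carrier (alt_group 4)"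
    by (auto simp: DirProd_def)
  have c: "lift_Cx p \<in> carrier G" "lift_Cx p' \<in> carrier G" "iso_Kx q \<in> carrier G" "iso_Kx q' \<in> carrier G"
    using lift_Cx_carrier iso_Kx_carrier pq by auto
  have "Gx_prod_map (x \<otimes>\<^bsub>alt_group 5 \<times>\<times> alt_group 4\<^esub> y) = lift_Cx (p \<circ> p') \<otimes> iso_Kx (q \<circ> q')"
    using pq by (simp add: Gx_prod_map_def DirProd_def alt_group_mult)
  also have "\<dots> = lift_Cx p \<otimes> (lift_Cx p' \<otimes> iso_Kx q) \<otimes> iso_Kx q'"
    using lift_Cx_mult iso_Kx_mult pq c by (simp add: m_assoc)
  also have "\<dots> = lift_Cx p \<otimes> (iso_Kx q \<otimes> lift_Cx p') \<otimes> iso_Kx q'" using lift_Cx_iso_Kx_commute pq by simp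
  also have "\<dots> = Gx_prod_map x \<otimes>\<^bsub>G\<lparr>carrier := Gx\<rparr>\<^esub> Gx_prod_map y" using pq c by (simp add: Gx_prod_map_def m_assoc)
  finally show "Gx_prod_map (x \<otimes>\<^bsub>alt_group 5 \<times>\<times> alt_group 4\<^esub> y) = Gx_prod_map x \<otimes>\<^bsub>G\<lparr>carrier := Gx\<rparr>\<^esub> Gx_prod_map y" .
qed

lemma inj_on_Gx_prod_map: "inj_on Gx_prod_map (carrier (alt_group 5 \<times>\<times> alt_group 4))"
proof (rule inj_onI)
  fix x y assume "x \<in> carrier (alt_group 5 \<times>\<times> alt_group 4)" "y \<in> carrier (alt_group 5 \<times>\<times> alt_group 4)"
    and e: "Gx_prod_map x = Gx_prod_map y"
  then obtain p q p' q' where pq: "x = (p, q)" "p \<in> carrier (alt_group 5)" "q \<in> carrier (alt_group 4)" "y = (p', q')" "p' \<in> carrier (alt_group 5)" "q' \<in> carrier (alt_group 4)"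
    by (auto simp: DirProd_def)
  have c: "lift_Cx p \<in> carrier G" "lift_Cx p' \<in> carrier G" "iso_Kx q \<in> carrier G" "iso_Kx q' \<in> carrier G"
    using lift_Cx_carrier iso_Kx_carrier pq by auto
  have e2: "lift_Cx p \<otimes> iso_Kx q = lift_Cx p' \<otimes> iso_Kx q'" using e pq by (simp add: Gx_prod_map_def)
  have "inv (lift_Cx p') \<otimes> lift_Cx p = iso_Kx q' \<otimes> inv (iso_Kx q)"
  proof -
    have "inv (lift_Cx p') \<otimes> (lift_Cx p \<otimes> iso_Kx q) \<otimes> inv (iso_Kx q) = inv (lift_Cx p') \<otimes> (lift_Cx p' \<otimes> iso_Kx q') \<otimes> inv (iso_Kx q)"
      using e2 by simp
    then show ?thesis using c by (simp add: m_assoc)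
  qed
  moreover have "inv (lift_Cx p') \<otimes> lift_Cx p \<in> Cx"
    using subgroup.m_closed[OF subgroup_Cx subgroup.m_inv_closed[OF subgroup_Cx] ] lift_Cx pq by blast
  moreover have "iso_Kx q' \<otimes> inv (iso_Kx q) \<in> Kx"
    using subgroup.m_closed[OF subgroup_Kx _ subgroup.m_inv_closed[OF subgroup_Kx]] iso_Kx_in_Kx pq by blast
  ultimately have 1: "inv (lift_Cx p') \<otimes> lift_Cx p = \<one>" "iso_Kx q' \<otimes> inv (iso_Kx q) = \<one>" using Cx_Kx_inter by auto
  have "lift_Cx p = lift_Cx p'" using 1(1) c by (metis inv_closed inv_equality inv_inv l_inv)
  then have "p = p'" using lift_Cx pq by metis
  moreover have "iso_Kx q' = iso_Kx q" using 1(2) c by (metis inv_equality inv_inv inv_closed r_inv)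
  then have "q = q'" using inj_onD[OF inj_on_iso_Kx] pq by metis
  ultimately show "x = y" using pq by simp
qed

lemma Gx_iso: "G\<lparr>carrier := Gx\<rparr> \<cong> alt_group 5 \<times>\<times> alt_group 4"
proof -
  have cD: "card (carrier (alt_group 5 \<times>\<times> alt_group 4)) = 720"
    using card_alt_group5 card_alt_group4 by (simp add: DirProd_def card_cartesian_product)
  have sub: "Gx_prod_map ` carrier (alt_group 5 \<times>\<times> alt_group 4) \<subseteq> Gx"
    using Gx_prod_map_hom by (auto simp: hom_def)
  have "card (Gx_prod_map ` carrier (alt_group 5 \<times>\<times> alt_group 4)) = 720"
    using card_image[OF inj_on_Gx_prod_map] cD by simp
  moreover have "card Gx = 720" using card_Gx_action card_Kx by simp
  ultimately have "Gx_prod_map ` carrier (alt_group 5 \<times>\<times> alt_group 4) = Gx"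
    using card_subset_eq[OF finite_Gx sub] by simp
  then have "Gx_prod_map \<in> iso (alt_group 5 \<times>\<times> alt_group 4) (G\<lparr>carrier := Gx\<rparr>)"
    using Gx_prod_map_hom inj_on_Gx_prod_map by (simp add: iso_def bij_betw_def)
  then have "alt_group 5 \<times>\<times> alt_group 4 \<cong> G\<lparr>carrier := Gx\<rparr>" by (rule is_isoI)
  then show ?thesis
    using group.iso_sym[OF DirProd_group[OF alt_group_is_group alt_group_is_group]] by blast
qed


text \<open>Writing \<open>t\<^sup>2 = a b\<close> with \<open>a \<in> Kx\<close>, \<open>b \<in> Ky\<close> and conjugating by \<open>t\<close> gives
  \<open>t\<^sup>2 = (t a t\<^sup>-\<^sup>1)(t b t\<^sup>-\<^sup>1)\<close> with factors in \<open>Ky\<close> and \<open>Kx\<close>, so uniqueness of the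
  decomposition forces \<open>t a t\<^sup>-\<^sup>1 = b\<close>.\<close>

lemma flip_square_decomposition: "\<exists>a\<in>Kx. \<exists>b\<in>Ky. t \<otimes> t = a \<otimes> b \<and> t \<otimes> a \<otimes> inv t = b"
proof -
  have tt: "t \<otimes> t \<in> Gx" using flip_square by auto
  have "\<psi> (t \<otimes> t) \<in> N" using flip_square action_Gxy N_eq_A4 by auto
  then obtain b where b: "b \<in> Ky" "\<psi> b = \<psi> (t \<otimes> t)" by (metis imageE)
  have bc: "b \<in> carrier G" using b Ky_carrier by auto
  define a where "a = t \<otimes> t \<otimes> inv b"
  have a: "a \<in> Kx" using action_eq[OF tt] b Ky_subset_Gxy by (auto simp: a_def)
  have ac: "a \<in> carrier G" using a Kx_carrier by auto
  have tt_eq: "t \<otimes> t = a \<otimes> b" using bc flip_carrier by (simp add: a_def m_assoc)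
  have k: "t \<otimes> b \<otimes> inv t \<in> Kx" using flip_conj_Ky[OF b(1)] .
  have m: "t \<otimes> a \<otimes> inv t \<in> Ky" using Ky_eq a by auto
  have "t \<otimes> (a \<otimes> b) \<otimes> inv t = a \<otimes> b"
    using tt_eq[symmetric] flip_carrier by (simp add: m_assoc)
  moreover have "t \<otimes> (a \<otimes> b) \<otimes> inv t = (t \<otimes> a \<otimes> inv t) \<otimes> (t \<otimes> b \<otimes> inv t)"
    using ac bc flip_carrier by (simp add: m_assoc)
  ultimately have "(t \<otimes> b \<otimes> inv t) \<otimes> (t \<otimes> a \<otimes> inv t) = a \<otimes> b"
    using Kx_Ky_commute[OF k m] by simp
  then have "t \<otimes> a \<otimes> inv t = b" using Kx_Ky_unique[OF k a m b(1)] by simp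
  with a b(1) tt_eq show ?thesis by blast
qed

lemma exists_swap: "\<exists>s. s \<in> Ge \<and> s \<notin> Gx \<and> s \<otimes> s = \<one> \<and> (\<forall>k\<in>Kx. s \<otimes> k \<otimes> s \<in> Ky)"
proof -
  obtain a b where a: "a \<in> Kx" and b: "b \<in> Ky" and tt_eq: "t \<otimes> t = a \<otimes> b"
    and conj_a: "t \<otimes> a \<otimes> inv t = b"
    using flip_square_decomposition by blast
  have ac: "a \<in> carrier G" and bc: "b \<in> carrier G" using a b Kx_carrier Ky_carrier by auto
  define s where "s = inv a \<otimes> t"
  have sc: "s \<in> carrier G" using ac flip_carrier by (simp add: s_def)
  have inv_a: "inv a \<in> Gxy" using subgroup.m_inv_closed[OF subgroup_Kx a] Kx_subset_Gxy by auto
  have "s \<otimes> s = \<one>"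
  proof -
    have e1: "t \<otimes> inv a \<otimes> inv t = inv b"
      using conj_a ac flip_carrier by (metis inv_mult_group inv_inv inv_closed m_closed m_assoc)
    have e2: "inv b \<otimes> a = a \<otimes> inv b"
      using Kx_Ky_commute[OF a subgroup.m_inv_closed[OF subgroup_Ky b]] by simp
    have "s \<otimes> s = inv a \<otimes> (t \<otimes> inv a \<otimes> inv t) \<otimes> (t \<otimes> t)"
      using ac flip_carrier by (simp add: s_def m_assoc)
    also have "\<dots> = inv a \<otimes> (inv b \<otimes> a) \<otimes> b" using e1 tt_eq ac bc by (simp add: m_assoc)
    also have "\<dots> = \<one>" using e2 ac bc by (simp add: m_assoc)
    finally show ?thesis .
  qed
  moreover have "s \<in> Ge"
    using subgroup.m_closed[OF subgroup_Ge _ flip_elt(1)] inv_a by (auto simp: s_def)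
  moreover have "s \<notin> Gx"
  proof
    assume "s \<in> Gx"
    then have "a \<otimes> s \<in> Gx" using subgroup.m_closed[OF subgroup_Gx] a Kx_subset_Gx by auto
    then show False using ac flip_carrier flip_elt(2) by (simp add: s_def m_assoc[symmetric])
  qed
  moreover have "s \<otimes> k \<otimes> s \<in> Ky" if k: "k \<in> Kx" for k
  proof -
    have "inv s = s" using \<open>s \<otimes> s = \<one>\<close> sc by (simp add: inv_equality)
    moreover have "inv a \<otimes> (t \<otimes> k \<otimes> inv t) \<otimes> inv (inv a) \<in> Ky"
      using Ky_conj_closed[OF inv_a] Ky_eq k by auto
    ultimately show ?thesis
      using ac flip_carrier k Kx_carrier by (auto simp: s_def m_assoc inv_mult_group)
  qed
  ultimately show ?thesis by blast
qed

definition swap :: 'a where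
  "swap = (SOME s. s \<in> Ge \<and> s \<notin> Gx \<and> s \<otimes> s = \<one> \<and> (\<forall>k\<in>Kx. s \<otimes> k \<otimes> s \<in> Ky))"

lemma swap: "swap \<in> Ge" "swap \<notin> Gx" "swap \<otimes> swap = \<one>" "k \<in> Kx \<Longrightarrow> swap \<otimes> k \<otimes> swap \<in> Ky"
  using someI_ex[OF exists_swap] by (simp_all add: swap_def)

lemma swap_carrier: "swap \<in> carrier G"
  using swap(1) Ge_carrier by auto

definition iso_Ky where "iso_Ky = (\<lambda>q. swap \<otimes> iso_Kx q \<otimes> swap)"

lemma iso_Ky_in_Ky: "q \<in> carrier (alt_group 4) \<Longrightarrow> iso_Ky q \<in> Ky"
  using swap(4) iso_Kx_in_Kx by (simp add: iso_Ky_def)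

lemma iso_Ky_carrier: "q \<in> carrier (alt_group 4) \<Longrightarrow> iso_Ky q \<in> carrier G"
  using iso_Ky_in_Ky Ky_carrier by auto

lemma iso_Ky_mult:
  assumes "q \<in> carrier (alt_group 4)" "q' \<in> carrier (alt_group 4)"
  shows "iso_Ky (q \<circ> q') = iso_Ky q \<otimes> iso_Ky q'"
proof -
  have c: "iso_Kx q \<in> carrier G" "iso_Kx q' \<in> carrier G" using iso_Kx_carrier assms by auto
  have "iso_Ky q \<otimes> iso_Ky q' = swap \<otimes> iso_Kx q \<otimes> (swap \<otimes> swap) \<otimes> iso_Kx q' \<otimes> swap"
    using c swap_carrier by (simp add: iso_Ky_def m_assoc)
  then show ?thesis using swap(3) c swap_carrier iso_Kx_mult[OF assms] by (simp add: iso_Ky_def m_assoc)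
qed

lemma swap_iso_Kx: "q \<in> carrier (alt_group 4) \<Longrightarrow> swap \<otimes> iso_Kx q = iso_Ky q \<otimes> swap"
  using swap(3) swap_carrier iso_Kx_carrier by (simp add: iso_Ky_def m_assoc)

lemma swap_iso_Ky: "q \<in> carrier (alt_group 4) \<Longrightarrow> swap \<otimes> iso_Ky q = iso_Kx q \<otimes> swap"
  using swap(3) swap_carrier iso_Kx_carrier by (simp add: iso_Ky_def m_assoc[symmetric])

lemma swap_conj_iso_Ky:
  assumes "q \<in> carrier (alt_group 4)"
  shows "swap \<otimes> iso_Ky q \<otimes> swap = iso_Kx q"
proof -
  have "swap \<otimes> iso_Ky q \<otimes> swap = (swap \<otimes> swap) \<otimes> iso_Kx q \<otimes> (swap \<otimes> swap)"
    using swap_carrier iso_Kx_carrier[OF assms] by (simp add: iso_Ky_def m_assoc)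
  then show ?thesis using swap(3) iso_Kx_carrier[OF assms] by simp
qed

definition wreath_map where
  "wreath_map = (\<lambda>(x, y, \<sigma>). iso_Kx x \<otimes> iso_Ky y \<otimes> (if \<sigma> then swap else \<one>))"

lemma wreath_C2_alt4_mult:
  "(x, y, \<sigma>) \<otimes>\<^bsub>wreath_C2 (alt_group 4)\<^esub> (x', y', \<sigma>') =
     (if \<sigma> then (x \<circ> y', y \<circ> x', \<sigma> \<noteq> \<sigma>') else (x \<circ> x', y \<circ> y', \<sigma> \<noteq> \<sigma>'))"
  by (simp add: wreath_C2_def wreath_mult_def alt_group_mult)

lemma wreath_map_mult:
  assumes A4: "x \<in> carrier (alt_group 4)" "y \<in> carrier (alt_group 4)"
    "x' \<in> carrier (alt_group 4)" "y' \<in> carrier (alt_group 4)"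
  shows "wreath_map (x, y, \<sigma>) \<otimes> wreath_map (x', y', \<sigma>') =
    wreath_map ((x, y, \<sigma>) \<otimes>\<^bsub>wreath_C2 (alt_group 4)\<^esub> (x', y', \<sigma>'))"
proof -
  have c: "iso_Kx x \<in> carrier G" "iso_Kx x' \<in> carrier G" "iso_Ky y \<in> carrier G" "iso_Ky y' \<in> carrier G"
    "iso_Kx y' \<in> carrier G" "iso_Ky x' \<in> carrier G"
    using iso_Kx_carrier iso_Ky_carrier A4 by auto
  have sigc: "(if \<sigma>' then swap else \<one>) \<in> carrier G" using swap_carrier by auto
  have comm: "iso_Kx p \<otimes> m = m \<otimes> iso_Kx p" if "p \<in> carrier (alt_group 4)" "m \<in> Ky" for p m
    using Kx_Ky_commute iso_Kx_in_Kx that by auto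
  show ?thesis
  proof (cases \<sigma>)
    case False
    have "wreath_map (x, y, \<sigma>) \<otimes> wreath_map (x', y', \<sigma>')
        = iso_Kx x \<otimes> (iso_Ky y \<otimes> iso_Kx x') \<otimes> iso_Ky y' \<otimes> (if \<sigma>' then swap else \<one>)"
      using False c sigc by (simp add: wreath_map_def m_assoc)
    also have "\<dots> = iso_Kx x \<otimes> (iso_Kx x' \<otimes> iso_Ky y) \<otimes> iso_Ky y' \<otimes> (if \<sigma>' then swap else \<one>)"
      using comm[OF A4(3) iso_Ky_in_Ky[OF A4(2)]] by simp
    also have "\<dots> = iso_Kx (x \<circ> x') \<otimes> iso_Ky (y \<circ> y') \<otimes> (if \<sigma>' then swap else \<one>)"
      using iso_Kx_mult iso_Ky_mult A4 c by (simp add: m_assoc)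
    finally show ?thesis using False by (simp add: wreath_map_def wreath_C2_alt4_mult)
  next
    case True
    have "wreath_map (x, y, \<sigma>) \<otimes> wreath_map (x', y', \<sigma>')
        = iso_Kx x \<otimes> iso_Ky y \<otimes> (swap \<otimes> iso_Kx x') \<otimes> iso_Ky y' \<otimes> (if \<sigma>' then swap else \<one>)"
      using True c sigc swap_carrier by (simp add: wreath_map_def m_assoc)
    also have "\<dots> = iso_Kx x \<otimes> iso_Ky y \<otimes> iso_Ky x' \<otimes> (swap \<otimes> iso_Ky y') \<otimes> (if \<sigma>' then swap else \<one>)"
      using swap_iso_Kx A4 c swap_carrier by (simp add: m_assoc)
    also have "\<dots> = iso_Kx x \<otimes> (iso_Ky y \<otimes> iso_Ky x' \<otimes> iso_Kx y') \<otimes> (swap \<otimes> (if \<sigma>' then swap else \<one>))"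
      using swap_iso_Ky A4 c swap_carrier sigc by (simp add: m_assoc)
    also have "iso_Ky y \<otimes> iso_Ky x' \<otimes> iso_Kx y' = iso_Kx y' \<otimes> (iso_Ky y \<otimes> iso_Ky x')"
      using comm[OF A4(4)] subgroup.m_closed[OF subgroup_Ky iso_Ky_in_Ky[OF A4(2)] iso_Ky_in_Ky[OF A4(3)]]
      by simp
    also have "swap \<otimes> (if \<sigma>' then swap else \<one>) = (if \<not> \<sigma>' then swap else \<one>)"
      using swap(3) swap_carrier by auto
    also have "iso_Kx x \<otimes> (iso_Kx y' \<otimes> (iso_Ky y \<otimes> iso_Ky x')) \<otimes> (if \<not> \<sigma>' then swap else \<one>)
        = iso_Kx (x \<circ> y') \<otimes> iso_Ky (y \<circ> x') \<otimes> (if \<not> \<sigma>' then swap else \<one>)"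
      using iso_Kx_mult iso_Ky_mult A4 c by (simp add: m_assoc)
    finally show ?thesis using True by (simp add: wreath_map_def wreath_C2_alt4_mult)
  qed
qed

lemma wreath_map_hom: "wreath_map \<in> hom (wreath_C2 (alt_group 4)) (G\<lparr>carrier := Ge\<rparr>)"
proof (rule homI)
  fix w assume "w \<in> carrier (wreath_C2 (alt_group 4))"
  then obtain x y \<sigma> where w: "w = (x, y, \<sigma>)" "x \<in> carrier (alt_group 4)" "y \<in> carrier (alt_group 4)"
    by (auto simp: wreath_C2_def)
  have "iso_Kx x \<in> Ge" "iso_Ky y \<in> Ge" "(if \<sigma> then swap else \<one>) \<in> Ge"
    using iso_Kx_in_Kx iso_Ky_in_Ky w Kx_subset_Gxy Ky_subset_Gxy swap(1) subgroup.one_closed[OF subgroup_Ge]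
    by auto
  then show "wreath_map w \<in> carrier (G\<lparr>carrier := Ge\<rparr>)"
    using w subgroup.m_closed[OF subgroup_Ge] by (simp add: wreath_map_def)
next
  fix w w' assume "w \<in> carrier (wreath_C2 (alt_group 4))" "w' \<in> carrier (wreath_C2 (alt_group 4))"
  then show "wreath_map (w \<otimes>\<^bsub>wreath_C2 (alt_group 4)\<^esub> w') = wreath_map w \<otimes>\<^bsub>G\<lparr>carrier := Ge\<rparr>\<^esub> wreath_map w'"
    using wreath_map_mult by (auto simp: wreath_C2_def)
qed

lemma inj_on_wreath_map: "inj_on wreath_map (carrier (wreath_C2 (alt_group 4)))"
proof (rule inj_onI)
  fix w w' assume "w \<in> carrier (wreath_C2 (alt_group 4))" "w' \<in> carrier (wreath_C2 (alt_group 4))"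
    and eq: "wreath_map w = wreath_map w'"
  then obtain x y \<sigma> x' y' \<sigma>' where w: "w = (x, y, \<sigma>)" "w' = (x', y', \<sigma>')"
    and A4: "x \<in> carrier (alt_group 4)" "y \<in> carrier (alt_group 4)"
      "x' \<in> carrier (alt_group 4)" "y' \<in> carrier (alt_group 4)"
    by (auto simp: wreath_C2_def)
  have c: "iso_Kx x \<in> carrier G" "iso_Kx x' \<in> carrier G" "iso_Ky y \<in> carrier G" "iso_Ky y' \<in> carrier G"
    using iso_Kx_carrier iso_Ky_carrier A4 by auto
  have in_Gxy: "iso_Kx x \<otimes> iso_Ky y \<in> Gxy" "iso_Kx x' \<otimes> iso_Ky y' \<in> Gxy"
    using subgroup.m_closed[OF subgroup_Gxy] iso_Kx_in_Kx iso_Ky_in_Ky A4 Kx_subset_Gxy Ky_subset_Gxy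
    by (metis subsetD)+
  have eq': "iso_Kx x \<otimes> iso_Ky y \<otimes> (if \<sigma> then swap else \<one>) = iso_Kx x' \<otimes> iso_Ky y' \<otimes> (if \<sigma>' then swap else \<one>)"
    using eq w by (simp add: wreath_map_def)
  have not_swap: False if uv: "u \<in> Gxy" "v \<in> Gxy" "u \<otimes> swap = v" for u v
  proof -
    have "inv u \<otimes> v \<in> Gxy"
      using subgroup.m_closed[OF subgroup_Gxy subgroup.m_inv_closed[OF subgroup_Gxy uv(1)] uv(2)] .
    moreover have "inv u \<otimes> v = swap" using uv Gxy_carrier swap_carrier by (auto simp: m_assoc[symmetric])
    ultimately show False using swap(2) by auto
  qed
  have "\<sigma> = \<sigma>'"
    using eq' not_swap[OF in_Gxy] not_swap[OF in_Gxy(2,1)] c by (cases \<sigma>; cases \<sigma>') auto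
  then have "iso_Kx x \<otimes> iso_Ky y = iso_Kx x' \<otimes> iso_Ky y'"
    using eq' c swap_carrier by (cases \<sigma>) simp_all
  then have "iso_Kx x = iso_Kx x'" "iso_Ky y = iso_Ky y'"
    using Kx_Ky_unique iso_Kx_in_Kx iso_Ky_in_Ky A4 by blast+
  moreover have "iso_Kx y = iso_Kx y'"
    using \<open>iso_Ky y = iso_Ky y'\<close> swap_conj_iso_Ky A4 by metis
  ultimately show "w = w'"
    using inj_onD[OF inj_on_iso_Kx] A4 w \<open>\<sigma> = \<sigma>'\<close> by auto
qed

lemma Ge_iso: "G\<lparr>carrier := Ge\<rparr> \<cong> wreath_C2 (alt_group 4)"
proof -
  have "card (carrier (wreath_C2 (alt_group 4))) = 288"
    using card_alt_group4 by (simp add: wreath_C2_def card_cartesian_product)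
  moreover have "card Ge = 288"
    using card_Ge card_Gxy_action action_Gxy card_alt_group4 card_Kx by simp
  moreover have "wreath_map ` carrier (wreath_C2 (alt_group 4)) \<subseteq> Ge"
    using wreath_map_hom by (auto simp: hom_def)
  ultimately have "wreath_map ` carrier (wreath_C2 (alt_group 4)) = Ge"
    using card_subset_eq[OF finite_Ge] card_image[OF inj_on_wreath_map] by metis
  then have "wreath_map \<in> iso (wreath_C2 (alt_group 4)) (G\<lparr>carrier := Ge\<rparr>)"
    using wreath_map_hom inj_on_wreath_map by (simp add: iso_def bij_betw_def)
  then show ?thesis
    using group.iso_sym[OF wreath_C2_group[OF alt_group_is_group]] is_isoI by blast
qed

end





theorem mainTheorem12:
  fixes G :: "('a, 'b) monoid_scheme" and Gx Ge :: "'a set"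
  assumes "group G"
    and "subgroup Gx G" and "subgroup Ge G"
    and "finite Gx" and "finite Ge"
    and "sub_index G Gx (Gx \<inter> Ge) = 5"
    and "sub_index G Ge (Gx \<inter> Ge) = 2"
    and "primitive_amalgam G Gx Ge"
    and "Gxy1 G Gx Ge = {\<one>\<^bsub>G\<^esub>}"
    and "Gx1 G Gx Ge \<noteq> {\<one>\<^bsub>G\<^esub>}"
    and "G\<lparr>carrier := Gx\<rparr> Mod Gx1 G Gx Ge \<cong> alt_group 5"
  shows "G\<lparr>carrier := Gx\<rparr> \<cong> alt_group 5 \<times>\<times> alt_group 4 \<and>
         G\<lparr>carrier := Ge\<rparr> \<cong> wreath_C2 (alt_group 4)"
proof -
  interpret amalgam_5_2 G Gx Ge
    using assms(1-7,9,10) by (intro amalgam_5_2.intro amalgam_5_2_axioms.intro)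
  obtain \<psi> where "amalgam_action G Gx Ge \<psi>" "\<psi> ` Gxy = carrier (alt_group 4)"
    using action_exists_A4[OF assms(11)] by blast
  then interpret amalgam_action_A4 G Gx Ge \<psi>
    by (intro amalgam_action_A4.intro amalgam_action_A4_axioms.intro)
  show ?thesis using Gx_iso Ge_iso by blast
qed

end
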